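(* Let $(\rho_\varepsilon,u_\varepsilon)$ be a smooth solution of the approximating system (A) on $(0,T)\times\mathbb T^d$ with $\rho_\varepsilon>0$. Then $$\frac{d}{dt}\int\Big(\frac{\rho_\varepsilon|u_\varepsilon|^2}{2}+\frac{\rho_\varepsilon^\gamma}{\gamma-1}+f_\varepsilon(\rho_\varepsilon)+2\kappa^2|h_\varepsilon'(\rho_\varepsilon)\nabla\sqrt{\rho_\varepsilon}|^2\Big)+2\nu\int h_\varepsilon(\rho_\varepsilon)|Du_\varepsilon|^2+2\nu\int g_\varepsilon(\rho_\varepsilon)|\operatorname{div}u_\varepsilon|^2+\int\tilde p_\varepsilon(\rho_\varepsilon)|u_\varepsilon|^2=0.$$
   Context: $d\in\{2,3\}$, $\mathbb T^d$ the flat torus, integrals over $\mathbb T^d$. Let $\nu,\kappa>0$ with $\kappa<\nu$, $\gamma>1$, $\varepsilon>0$ small (with $\varepsilon^2(\gamma-1)<1$), $\mu=\nu-\sqrt{\nu^2-\kappa^2}$. For $\rho>0$: $h_\varepsilon(\rho)=\rho+\varepsilon\rho^{7/8}+\varepsilon\rho^\gamma$, $g_\varepsilon(\rho)=\rho h_\varepsilon'(\rho)-h_\varepsilon(\rho)$; $\lambda(\varepsilon)=e^{-1/\varepsilon^4}$; $\tilde p_\varepsilon(\rho)=\lambda(\varepsilon)(\rho^{1/\varepsilon^2}+\rho^{-1/\varepsilon^2})$; $p_\varepsilon$ is the primitive of $\mu\tilde p_\varepsilon(\rho)h_\varepsilon'(\rho)/\rho$ that is a linear combination of powers of $\rho$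 (no additive constant), i.e. $p_\varepsilon(\rho)=\mu\lambda(\varepsilon)\big[\varepsilon^2\rho^{1/\varepsilon^2}+\frac{7\varepsilon^3}{8-\varepsilon^2}\rho^{1/\varepsilon^2-1/8}+\frac{\gamma\varepsilon^3}{1+\varepsilon^2(\gamma-1)}\rho^{1/\varepsilon^2+\gamma-1}-\varepsilon^2\rho^{-1/\varepsilon^2}-\frac{7\varepsilon^3}{8+\varepsilon^2}\rho^{-1/\varepsilon^2-1/8}-\frac{\gamma\varepsilon^3}{1-\varepsilon^2(\gamma-1)}\rho^{-1/\varepsilon^2+\gamma-1}\big]$; $f_\varepsilon$ is obtained from $p_\varepsilon$ by replacing each term $a\rho^s$ by $\frac{a}{s-1}\rho^s$, so that $\rho f_\varepsilon'(\rho)-f_\varepsilon(\rho)=p_\varepsilon(\rho)$. With $Du=(\nabla u+\nabla u^T)/2$, $\mathbb S_\varepsilon=h_\varepsilon(\rho)Du+g_\varepsilon(\rho)\operatorname{div}u\,\mathbb I$ and $\operatorname{div}\mathbb K_\varepsilon=2\rho\nabla\big(h_\varepsilon'(\rho)\operatorname{div}(h_\varepsilon'(\rho)\nabla\sqrt\rho)/\sqrt\rho\big)$, system (A) is $$\partial_t\rho+\operatorname{div}(\rho u)=0,\quad \partial_t(\rho u)+\operatorname{div}(\rho u\otimes u)-2\nu\operatorname{div}\mathbb S_\varepsilon+\nabla(\rho^\gamma+p_\varepsilon(\rho))+\tilde p_\varepsilon(\rho)u=\kappa^2\operatorname{div}\mathbb K_\varepsilon.$$ *)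

theory Defs
  imports "HOL-Analysis.Analysis"
begin

definition ddir :: "'a::real_normed_vector \<Rightarrow> ('a \<Rightarrow> real) \<Rightarrow> 'a \<Rightarrow> real" where
  "ddir v F x = deriv (\<lambda>s. F (x + s *\<^sub>R v)) 0"

primrec iterd :: "'a::real_normed_vector list \<Rightarrow> ('a \<Rightarrow> real) \<Rightarrow> 'a \<Rightarrow> real" where
  "iterd [] F = F"
| "iterd (v # vs) F = ddir v (iterd vs F)"

definition smooth_on :: "'a::real_normed_vector set \<Rightarrow> ('a \<Rightarrow> real) \<Rightarrow> bool" where
  "smooth_on S F \<longleftrightarrow> open S \<and>
     (\<forall>vs. continuous_on S (iterd vs F) \<and>
        (\<forall>v. \<forall>x\<in>S. (\<lambda>s. iterd vs F (x + s *\<^sub>R v)) differentiable (at 0)))"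

definition dx :: "'n::finite \<Rightarrow> (real^'n \<Rightarrow> real) \<Rightarrow> real^'n \<Rightarrow> real" where
  "dx i F x = ddir (axis i 1) F x"

definition dtime :: "(real \<Rightarrow> real^'n \<Rightarrow> real) \<Rightarrow> real \<Rightarrow> real^'n \<Rightarrow> real" where
  "dtime F t x = deriv (\<lambda>s. F s x) t"

definition grad :: "(real^'n::finite \<Rightarrow> real) \<Rightarrow> real^'n \<Rightarrow> real^'n" where
  "grad F x = (\<chi> i. dx i F x)"

definition divg :: "(real^'n::finite \<Rightarrow> real^'n) \<Rightarrow> real^'n \<Rightarrow> real" where
  "divg U x = (\<Sum>i\<in>UNIV. dx i (\<lambda>y. U y $ i) x)"

definition Dsym :: "(real^'n::finite \<Rightarrow> real^'n) \<Rightarrow> 'n \<Rightarrow> 'n \<Rightarrow> real^'n \<Rightarrow> real" where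
  "Dsym U i j x = (dx j (\<lambda>y. U y $ i) x + dx i (\<lambda>y. U y $ j) x) / 2"

definition lam :: "real \<Rightarrow> real" where
  "lam \<epsilon> = exp (- 1 / \<epsilon> ^ 4)"

definition hfun :: "real \<Rightarrow> real \<Rightarrow> real \<Rightarrow> real" where
  "hfun \<epsilon> \<gamma> r = r + \<epsilon> * r powr (7/8) + \<epsilon> * r powr \<gamma>"

definition hp :: "real \<Rightarrow> real \<Rightarrow> real \<Rightarrow> real" where
  "hp \<epsilon> \<gamma> r = deriv (hfun \<epsilon> \<gamma>) r"

definition gfun :: "real \<Rightarrow> real \<Rightarrow> real \<Rightarrow> real" where
  "gfun \<epsilon> \<gamma> r = r * hp \<epsilon> \<gamma> r - hfun \<epsilon> \<gamma> r"

definition ptil :: "real \<Rightarrow> real \<Rightarrow> real" where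
  "ptil \<epsilon> r = lam \<epsilon> * (r powr (1 / \<epsilon>\<^sup>2) + r powr (- 1 / \<epsilon>\<^sup>2))"

definition mu :: "real \<Rightarrow> real \<Rightarrow> real" where
  "mu \<nu> \<kappa> = \<nu> - sqrt (\<nu>\<^sup>2 - \<kappa>\<^sup>2)"

text \<open>The terms (coefficient, exponent) of p_eps / (mu * lambda).\<close>
definition pterms :: "real \<Rightarrow> real \<Rightarrow> (real \<times> real) list" where
  "pterms \<epsilon> \<gamma> =
    [ (\<epsilon>\<^sup>2, 1 / \<epsilon>\<^sup>2),
      (7 * \<epsilon> ^ 3 / (8 - \<epsilon>\<^sup>2), 1 / \<epsilon>\<^sup>2 - 1/8),
      (\<gamma> * \<epsilon> ^ 3 / (1 + \<epsilon>\<^sup>2 * (\<gamma> - 1)), 1 / \<epsilon>\<^sup>2 + \<gamma> - 1),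
      (- \<epsilon>\<^sup>2, - 1 / \<epsilon>\<^sup>2),
      (- 7 * \<epsilon> ^ 3 / (8 + \<epsilon>\<^sup>2), - 1 / \<epsilon>\<^sup>2 - 1/8),
      (- \<gamma> * \<epsilon> ^ 3 / (1 - \<epsilon>\<^sup>2 * (\<gamma> - 1)), - 1 / \<epsilon>\<^sup>2 + \<gamma> - 1) ]"

definition pfun :: "real \<Rightarrow> real \<Rightarrow> real \<Rightarrow> real \<Rightarrow> real \<Rightarrow> real" where
  "pfun \<nu> \<kappa> \<epsilon> \<gamma> r = mu \<nu> \<kappa> * lam \<epsilon> *
     sum_list (map (\<lambda>(a, s). a * r powr s) (pterms \<epsilon> \<gamma>))"

definition ffun :: "real \<Rightarrow> real \<Rightarrow> real \<Rightarrow> real \<Rightarrow> real \<Rightarrow> real" where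
  "ffun \<nu> \<kappa> \<epsilon> \<gamma> r = mu \<nu> \<kappa> * lam \<epsilon> *
     sum_list (map (\<lambda>(a, s). a / (s - 1) * r powr s) (pterms \<epsilon> \<gamma>))"

text \<open>The torus T^d is realised as 1-periodic functions on R^d; integrals over
  T^d are integrals over the unit cube.\<close>

definition is_smooth_solution_A ::
  "real \<Rightarrow> real \<Rightarrow> real \<Rightarrow> real \<Rightarrow> real \<Rightarrow>
   (real \<Rightarrow> real^'n::finite \<Rightarrow> real) \<Rightarrow> (real \<Rightarrow> real^'n \<Rightarrow> real^'n) \<Rightarrow> bool" where
  "is_smooth_solution_A \<nu> \<kappa> \<gamma> \<epsilon> T \<rho> u \<longleftrightarrow>
    smooth_on ({0<..<T} \<times> UNIV) (\<lambda>(t, x). \<rho> t x) \<and>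
    (\<forall>j. smooth_on ({0<..<T} \<times> UNIV) (\<lambda>(t, x). u t x $ j)) \<and>
    (\<forall>t\<in>{0<..<T}. \<forall>x. \<forall>i. \<rho> t (x + axis i 1) = \<rho> t x \<and> u t (x + axis i 1) = u t x) \<and>
    (\<forall>t\<in>{0<..<T}. \<forall>x. \<rho> t x > 0) \<and>
    (\<forall>t\<in>{0<..<T}. \<forall>x.
       dtime \<rho> t x + (\<Sum>i\<in>UNIV. dx i (\<lambda>y. \<rho> t y * u t y $ i) x) = 0) \<and>
    (\<forall>t\<in>{0<..<T}. \<forall>x. \<forall>j.
       dtime (\<lambda>s y. \<rho> s y * u s y $ j) t x
       + (\<Sum>i\<in>UNIV. dx i (\<lambda>y. \<rho> t y * u t y $ i * u t y $ j) x)
       - 2 * \<nu> * (\<Sum>i\<in>UNIV. dx i (\<lambda>y. hfun \<epsilon> \<gamma> (\<rho> t y) * Dsym (u t) i j y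
              + (if i = j then gfun \<epsilon> \<gamma> (\<rho> t y) * divg (u t) y else 0)) x)
       + dx j (\<lambda>y. \<rho> t y powr \<gamma> + pfun \<nu> \<kappa> \<epsilon> \<gamma> (\<rho> t y)) x
       + ptil \<epsilon> (\<rho> t x) * u t x $ j
       = \<kappa>\<^sup>2 * (2 * \<rho> t x * dx j (\<lambda>y. hp \<epsilon> \<gamma> (\<rho> t y) *
             (\<Sum>i\<in>UNIV. dx i (\<lambda>z. hp \<epsilon> \<gamma> (\<rho> t z) * dx i (\<lambda>w. sqrt (\<rho> t w)) z) y)
             / sqrt (\<rho> t y)) x))"

end

theory Submission
  imports Defs
begin

text \<open>With F(r) = r powr \<gamma> / (\<gamma> - 1) + f(r) and \<Phi>' = h'/(2 sqrt r), so that
  \<Psi> = h'(\<rho>) \<nabla>sqrt \<rho> = \<nabla>\<Phi>(\<rho>), the energy density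
  E = \<rho>|u|^2/2 + F(\<rho>) + 2\<kappa>^2 |\<Psi>|^2 satisfies a pointwise balance law
  dE/dt = div(flux) - 2\<nu> (h(\<rho>)|Du|^2 + g(\<rho>)|div u|^2) - ptil(\<rho>)|u|^2.
  It comes from testing the momentum equation with u and eliminating every time derivative of \<rho>
  with the continuity equation: in the kinetic energy directly, in the pressure term through
  r F''(r) = (r powr \<gamma> + p)'(r), and in the capillarity term through dt \<Psi> = \<nabla>(dt \<Phi>(\<rho>)),
  i.e. the symmetry of second derivatives. All coefficients are finite combinations of powers
  of \<rho>, hence smooth along the positive solution. Integrated over the torus the divergence
  vanishes by periodicity, and differentiation under the integral sign gives the identity.\<close>

section \<open>Smooth functions\<close>

lemma iterd_append: "iterd (vs @ ws) F = iterd vs (iterd ws F)"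
  by (induction vs) auto

definition dir_differentiable_on :: "'a::real_normed_vector set \<Rightarrow> ('a \<Rightarrow> real) \<Rightarrow> bool" where
  "dir_differentiable_on S F \<longleftrightarrow>
     continuous_on S F \<and> (\<forall>v. \<forall>x\<in>S. (\<lambda>s. F (x + s *\<^sub>R v)) differentiable (at 0))"

lemma smooth_on_iff_iterd:
  "smooth_on S F \<longleftrightarrow> open S \<and> (\<forall>vs. dir_differentiable_on S (iterd vs F))"
  by (auto simp: smooth_on_def dir_differentiable_on_def)

lemma smooth_on_ddir: "smooth_on S F \<Longrightarrow> smooth_on S (ddir v F)"
  unfolding smooth_on_iff_iterd
proof safe
  fix vs assume "\<forall>vs. dir_differentiable_on S (iterd vs F)"
  then have "dir_differentiable_on S (iterd (vs @ [v]) F)" by blast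
  then show "dir_differentiable_on S (iterd vs (ddir v F))" by (simp add: iterd_append)
qed

lemma smooth_on_dir_differentiable: "smooth_on S F \<Longrightarrow> dir_differentiable_on S F"
  unfolding smooth_on_iff_iterd by (metis iterd.simps(1))

lemma smooth_on_open: "smooth_on S F \<Longrightarrow> open S"
  by (simp add: smooth_on_def)

lemma dir_differentiable_on_continuous: "dir_differentiable_on S F \<Longrightarrow> continuous_on S F"
  unfolding dir_differentiable_on_def by blast

lemma smooth_on_continuous: "smooth_on S F \<Longrightarrow> continuous_on S F"
  by (intro dir_differentiable_on_continuous smooth_on_dir_differentiable)

lemma dir_differentiable_onI:
  assumes "continuous_on S F"
    and "\<And>v x. x \<in> S \<Longrightarrow> \<exists>D. ((\<lambda>s. F (x + s *\<^sub>R v)) has_real_derivative D) (at 0)"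
  shows "dir_differentiable_on S F"
  unfolding dir_differentiable_on_def using assms real_differentiable_def by blast

lemma has_ddir:
  "dir_differentiable_on S F \<Longrightarrow> x \<in> S \<Longrightarrow>
   ((\<lambda>s. F (x + s *\<^sub>R v)) has_real_derivative ddir v F x) (at 0)"
  unfolding dir_differentiable_on_def ddir_def by (simp add: DERIV_deriv_iff_real_differentiable)

lemma smooth_on_has_ddir:
  "smooth_on S F \<Longrightarrow> x \<in> S \<Longrightarrow> ((\<lambda>s. F (x + s *\<^sub>R v)) has_real_derivative ddir v F x) (at 0)"
  using has_ddir smooth_on_dir_differentiable by blast

lemma smooth_on_has_ddir_at:
  fixes x v :: "'a::real_normed_vector"
  assumes "smooth_on S F" "x + s0 *\<^sub>R v \<in> S"
  shows "((\<lambda>s. F (x + s *\<^sub>R v)) has_real_derivative ddir v F (x + s0 *\<^sub>R v)) (at s0)"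
proof -
  have "(\<lambda>s. F (x + (s + s0) *\<^sub>R v)) = (\<lambda>s. F ((x + s0 *\<^sub>R v) + s *\<^sub>R v))"
    by (simp add: scaleR_add_left add_ac)
  then have "((\<lambda>s. F (x + (s + s0) *\<^sub>R v)) has_real_derivative ddir v F (x + s0 *\<^sub>R v)) (at 0)"
    using smooth_on_has_ddir[OF assms] by simp
  then show ?thesis using DERIV_shift[of "\<lambda>s. F (x + s *\<^sub>R v)" _ 0 s0] by simp
qed

lemma open_line_preimage:
  fixes x v :: "'a::real_normed_vector"
  shows "open S \<Longrightarrow> open {s::real. x + s *\<^sub>R v \<in> S}"
  using open_vimage[of S "\<lambda>s::real. x + s *\<^sub>R v"] by (simp add: vimage_def continuous_intros)

lemma ddir_cong:
  fixes x :: "'a::real_normed_vector"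
  assumes "open S" "x \<in> S" "\<And>y. y \<in> S \<Longrightarrow> F y = G y"
  shows "ddir v F x = ddir v G x"
  unfolding ddir_def
proof (rule deriv_cong_ev)
  have "eventually (\<lambda>s. s \<in> {s::real. x + s *\<^sub>R v \<in> S}) (nhds 0)"
    using open_line_preimage[OF assms(1)] assms(2) by (intro eventually_nhds_in_open) auto
  then show "eventually (\<lambda>s. F (x + s *\<^sub>R v) = G (x + s *\<^sub>R v)) (nhds 0)"
    by eventually_elim (use assms in auto)
qed simp

lemma dir_differentiable_on_cong:
  assumes "open S" "dir_differentiable_on S F" "\<And>y. y \<in> S \<Longrightarrow> F y = G y"
  shows "dir_differentiable_on S G"
proof (rule dir_differentiable_onI)
  show "continuous_on S G"
    using assms continuous_on_cong dir_differentiable_on_continuous by metis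
  fix v x assume x: "x \<in> S"
  have "((\<lambda>s. G (x + s *\<^sub>R v)) has_real_derivative ddir v F x) (at 0)"
    by (rule has_field_derivative_transform_within_open[OF has_ddir[OF assms(2) x]
          open_line_preimage[OF assms(1)]])
       (use x assms(3) in auto)
  then show "\<exists>D. ((\<lambda>s. G (x + s *\<^sub>R v)) has_real_derivative D) (at 0)" by blast
qed

lemma smooth_on_ddir_closed_class:
  assumes S: "open S"
    and diff: "\<And>F. F \<in> C \<Longrightarrow> dir_differentiable_on S F"
    and closed: "\<And>F v. F \<in> C \<Longrightarrow> \<exists>G\<in>C. \<forall>x\<in>S. ddir v F x = G x"
    and F: "F \<in> C"
  shows "smooth_on S F"
proof -
  have iterd_in_C: "\<forall>F\<in>C. \<exists>G\<in>C. \<forall>x\<in>S. iterd vs F x = G x" for vs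
  proof (induction vs)
    case (Cons v vs)
    show ?case
    proof
      fix F assume "F \<in> C"
      with Cons obtain G where G: "G \<in> C" "\<forall>x\<in>S. iterd vs F x = G x" by blast
      obtain H where H: "H \<in> C" "\<forall>x\<in>S. ddir v G x = H x" using closed[OF G(1)] by blast
      have "\<forall>x\<in>S. iterd (v # vs) F x = H x"
        using ddir_cong[OF S _ , of _ "iterd vs F" G v] G(2) H(2) by auto
      with H(1) show "\<exists>G\<in>C. \<forall>x\<in>S. iterd (v # vs) F x = G x" by blast
    qed
  qed auto
  have "dir_differentiable_on S (iterd vs F)" for vs
  proof -
    obtain G where G: "G \<in> C" "\<forall>x\<in>S. iterd vs F x = G x" using iterd_in_C F by blast
    show ?thesis by (rule dir_differentiable_on_cong[OF S diff[OF G(1)]]) (use G(2) in simp)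
  qed
  with S show ?thesis unfolding smooth_on_iff_iterd by blast
qed

lemma ddir_const: "ddir v (\<lambda>_. c) x = 0"
  unfolding ddir_def by (rule DERIV_imp_deriv) (rule DERIV_const)

lemma dir_differentiable_on_const: "dir_differentiable_on S (\<lambda>_. c)"
  by (rule dir_differentiable_onI) (auto intro!: continuous_intros DERIV_const)

lemma dir_differentiable_on_add:
  assumes "dir_differentiable_on S F" "dir_differentiable_on S G"
  shows "dir_differentiable_on S (\<lambda>z. F z + G z)"
proof (rule dir_differentiable_onI)
  show "continuous_on S (\<lambda>z. F z + G z)"
    using assms by (intro continuous_intros dir_differentiable_on_continuous)
  fix v x assume "x \<in> S"
  then show "\<exists>D. ((\<lambda>s. F (x + s *\<^sub>R v) + G (x + s *\<^sub>R v)) has_real_derivative D) (at 0)"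
    using DERIV_add[OF has_ddir[OF assms(1)] has_ddir[OF assms(2)]] by blast
qed

lemma ddir_add:
  assumes "dir_differentiable_on S F" "dir_differentiable_on S G" "x \<in> S"
  shows "ddir v (\<lambda>z. F z + G z) x = ddir v F x + ddir v G x"
  unfolding ddir_def[of v "\<lambda>z. F z + G z"]
  by (rule DERIV_imp_deriv[OF DERIV_add[OF has_ddir[OF assms(1,3)] has_ddir[OF assms(2,3)]]])

lemma dir_differentiable_on_mult:
  assumes "dir_differentiable_on S F" "dir_differentiable_on S G"
  shows "dir_differentiable_on S (\<lambda>z. F z * G z)"
proof (rule dir_differentiable_onI)
  show "continuous_on S (\<lambda>z. F z * G z)"
    using assms by (intro continuous_intros dir_differentiable_on_continuous)
  fix v x assume "x \<in> S"
  then show "\<exists>D. ((\<lambda>s. F (x + s *\<^sub>R v) * G (x + s *\<^sub>R v)) has_real_derivative D) (at 0)"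
    using DERIV_mult[OF has_ddir[OF assms(1)] has_ddir[OF assms(2)]] by blast
qed

lemma ddir_mult:
  assumes "dir_differentiable_on S F" "dir_differentiable_on S G" "x \<in> S"
  shows "ddir v (\<lambda>z. F z * G z) x = ddir v F x * G x + F x * ddir v G x"
proof -
  have "((\<lambda>s. F (x + s *\<^sub>R v) * G (x + s *\<^sub>R v)) has_real_derivative
          ddir v F x * G (x + 0 *\<^sub>R v) + ddir v G x * F (x + 0 *\<^sub>R v)) (at 0)"
    by (rule DERIV_mult[OF has_ddir[OF assms(1,3)] has_ddir[OF assms(2,3)]])
  then show ?thesis
    unfolding ddir_def[of v "\<lambda>z. F z * G z"] by (simp add: DERIV_imp_deriv mult.commute)
qed

lemma dir_differentiable_on_powr:
  assumes "dir_differentiable_on S F" "\<And>z. z \<in> S \<Longrightarrow> 0 < F z"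
  shows "dir_differentiable_on S (\<lambda>z. F z powr a)"
proof (rule dir_differentiable_onI)
  have "\<forall>z\<in>S. F z \<noteq> 0" using assms(2) by force
  then show "continuous_on S (\<lambda>z. F z powr a)"
    by (intro continuous_intros dir_differentiable_on_continuous[OF assms(1)]) auto
  fix v x assume x: "x \<in> S"
  show "\<exists>D. ((\<lambda>s. F (x + s *\<^sub>R v) powr a) has_real_derivative D) (at 0)"
    using DERIV_fun_powr[OF has_ddir[OF assms(1) x]] assms(2)[OF x] by fastforce
qed

lemma ddir_powr:
  assumes "dir_differentiable_on S F" "x \<in> S" "0 < F x"
  shows "ddir v (\<lambda>z. F z powr a) x = a * F x powr (a - 1) * ddir v F x"
proof -
  have "((\<lambda>s. F (x + s *\<^sub>R v) powr a) has_real_derivative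
          a * F (x + 0 *\<^sub>R v) powr (a - real 1) * ddir v F x) (at 0)"
    by (rule DERIV_fun_powr[OF has_ddir[OF assms(1,2)]]) (simp add: assms(3))
  then show ?thesis unfolding ddir_def[of v "\<lambda>z. F z powr a"] by (simp add: DERIV_imp_deriv)
qed

text \<open>Closed under ddir up to equality on S by the rules above, hence contained in smooth_on
  (smooth_on_ddir_closed_class); this gives all closure properties of smooth_on at once.\<close>

inductive smooth_expr :: "'a::real_normed_vector set \<Rightarrow> ('a \<Rightarrow> real) \<Rightarrow> bool" for S where
  smooth: "smooth_on S F \<Longrightarrow> smooth_expr S F"
| const: "smooth_expr S (\<lambda>_. c)"
| add: "smooth_expr S F \<Longrightarrow> smooth_expr S G \<Longrightarrow> smooth_expr S (\<lambda>z. F z + G z)"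
| mult: "smooth_expr S F \<Longrightarrow> smooth_expr S G \<Longrightarrow> smooth_expr S (\<lambda>z. F z * G z)"
| powr: "smooth_expr S F \<Longrightarrow> (\<forall>z\<in>S. 0 < F z) \<Longrightarrow> smooth_expr S (\<lambda>z. F z powr a)"

lemma smooth_expr_ddir:
  assumes "smooth_expr S F"
  shows "dir_differentiable_on S F \<and> (\<forall>v. \<exists>G. smooth_expr S G \<and> (\<forall>x\<in>S. ddir v F x = G x))"
  using assms
proof induction
  case (smooth F)
  then show ?case using smooth_on_dir_differentiable smooth_on_ddir smooth_expr.smooth by blast
next
  case (const c)
  show ?case
    by (intro conjI allI exI[of _ "\<lambda>_. 0"])
       (simp_all add: dir_differentiable_on_const ddir_const smooth_expr.const)
next
  case (add F G)
  show ?case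
  proof (intro conjI allI)
    show "dir_differentiable_on S (\<lambda>z. F z + G z)"
      using add by (intro dir_differentiable_on_add) auto
    fix v
    obtain F' G' where "smooth_expr S F'" "\<forall>x\<in>S. ddir v F x = F' x"
      and "smooth_expr S G'" "\<forall>x\<in>S. ddir v G x = G' x"
      using add by metis
    with add show "\<exists>H. smooth_expr S H \<and> (\<forall>x\<in>S. ddir v (\<lambda>z. F z + G z) x = H x)"
      by (intro exI[of _ "\<lambda>z. F' z + G' z"]) (auto intro: smooth_expr.add simp: ddir_add)
  qed
next
  case (mult F G)
  show ?case
  proof (intro conjI allI)
    show "dir_differentiable_on S (\<lambda>z. F z * G z)"
      using mult by (intro dir_differentiable_on_mult) auto
    fix v
    obtain F' G' where "smooth_expr S F'" "\<forall>x\<in>S. ddir v F x = F' x"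
      and "smooth_expr S G'" "\<forall>x\<in>S. ddir v G x = G' x"
      using mult by metis
    with mult show "\<exists>H. smooth_expr S H \<and> (\<forall>x\<in>S. ddir v (\<lambda>z. F z * G z) x = H x)"
      by (intro exI[of _ "\<lambda>z. F' z * G z + F z * G' z"])
         (auto intro: smooth_expr.add smooth_expr.mult simp: ddir_mult)
  qed
next
  case (powr F a)
  show ?case
  proof (intro conjI allI)
    show "dir_differentiable_on S (\<lambda>z. F z powr a)"
      using powr by (intro dir_differentiable_on_powr) auto
    fix v
    obtain F' where "smooth_expr S F'" "\<forall>x\<in>S. ddir v F x = F' x"
      using powr by metis
    moreover from this(1) have "smooth_expr S (\<lambda>z. a * F z powr (a - 1) * F' z)"
      using powr by (intro smooth_expr.mult smooth_expr.const smooth_expr.powr)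
    ultimately show "\<exists>H. smooth_expr S H \<and> (\<forall>x\<in>S. ddir v (\<lambda>z. F z powr a) x = H x)"
      using powr by (intro exI[of _ "\<lambda>z. a * F z powr (a - 1) * F' z"]) (auto simp: ddir_powr)
  qed
qed

lemma smooth_expr_smooth_on: "open S \<Longrightarrow> smooth_expr S F \<Longrightarrow> smooth_on S F"
  by (rule smooth_on_ddir_closed_class[of S "{F. smooth_expr S F}"]) (use smooth_expr_ddir in auto)

lemma smooth_on_const: "open S \<Longrightarrow> smooth_on S (\<lambda>_. c)"
  by (rule smooth_expr_smooth_on) (auto intro: smooth_expr.const)

lemma smooth_on_add: "smooth_on S F \<Longrightarrow> smooth_on S G \<Longrightarrow> smooth_on S (\<lambda>z. F z + G z)"
  by (rule smooth_expr_smooth_on[OF smooth_on_open]) (auto intro: smooth_expr.intros)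

lemma smooth_on_mult: "smooth_on S F \<Longrightarrow> smooth_on S G \<Longrightarrow> smooth_on S (\<lambda>z. F z * G z)"
  by (rule smooth_expr_smooth_on[OF smooth_on_open]) (auto intro: smooth_expr.intros)

lemma smooth_on_powr:
  "smooth_on S F \<Longrightarrow> (\<And>z. z \<in> S \<Longrightarrow> 0 < F z) \<Longrightarrow> smooth_on S (\<lambda>z. F z powr a)"
  by (rule smooth_expr_smooth_on[OF smooth_on_open]) (auto intro: smooth_expr.intros)

lemma smooth_on_cmult: "smooth_on S F \<Longrightarrow> smooth_on S (\<lambda>z. c * F z)"
  by (intro smooth_on_mult smooth_on_const smooth_on_open)

lemma smooth_on_minus: "smooth_on S F \<Longrightarrow> smooth_on S (\<lambda>z. - F z)"
  using smooth_on_cmult[of S F "-1"] by simp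

lemma smooth_on_diff: "smooth_on S F \<Longrightarrow> smooth_on S G \<Longrightarrow> smooth_on S (\<lambda>z. F z - G z)"
  using smooth_on_add[of S F "\<lambda>z. - G z"] smooth_on_minus[of S G] by simp

lemma smooth_on_divide_const: "smooth_on S F \<Longrightarrow> smooth_on S (\<lambda>z. F z / c)"
  using smooth_on_cmult[of S F "1/c"] by simp

lemma smooth_on_sum:
  "finite I \<Longrightarrow> open S \<Longrightarrow> (\<And>i. i \<in> I \<Longrightarrow> smooth_on S (f i)) \<Longrightarrow>
   smooth_on S (\<lambda>z. \<Sum>i\<in>I. f i z)"
  by (induction I rule: finite_induct) (simp_all add: smooth_on_const smooth_on_add)

lemma smooth_on_if: "(P \<Longrightarrow> smooth_on S F) \<Longrightarrow> open S \<Longrightarrow> smooth_on S (\<lambda>z. if P then F z else 0)"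
  by (cases P) (auto simp: smooth_on_const)

lemma smooth_on_cong:
  assumes "smooth_on S F" "\<And>z. z \<in> S \<Longrightarrow> F z = G z"
  shows "smooth_on S G"
proof -
  have S: "open S" using assms smooth_on_open by blast
  let ?C = "{H. \<exists>F. smooth_on S F \<and> (\<forall>z\<in>S. F z = H z)}"
  show ?thesis
  proof (rule smooth_on_ddir_closed_class[OF S, of ?C])
    fix H assume "H \<in> ?C"
    then obtain F where F: "smooth_on S F" "\<forall>z\<in>S. F z = H z" by blast
    show "dir_differentiable_on S H"
      using dir_differentiable_on_cong[OF S smooth_on_dir_differentiable[OF F(1)]] F(2) by blast
    fix v
    have "\<forall>x\<in>S. ddir v H x = ddir v F x"
      using ddir_cong[OF S] F(2) by metis
    then show "\<exists>G\<in>?C. \<forall>x\<in>S. ddir v H x = G x" using smooth_on_ddir[OF F(1)] by blast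
  qed (use assms in blast)
qed

lemma smooth_on_divide:
  assumes "smooth_on S F" "smooth_on S G" "\<And>z. z \<in> S \<Longrightarrow> 0 < G z"
  shows "smooth_on S (\<lambda>z. F z / G z)"
proof (rule smooth_on_cong)
  show "smooth_on S (\<lambda>z. F z * G z powr (-1))"
    using assms by (intro smooth_on_mult smooth_on_powr) auto
  fix z assume "z \<in> S"
  with assms(3)[of z] show "F z * G z powr (-1) = F z / G z"
    by (simp add: powr_minus divide_inverse)
qed

lemma smooth_on_sqrt:
  assumes "smooth_on S G" "\<And>z. z \<in> S \<Longrightarrow> 0 < G z"
  shows "smooth_on S (\<lambda>z. sqrt (G z))"
proof (rule smooth_on_cong)
  show "smooth_on S (\<lambda>z. G z powr (1/2))"
    using assms by (intro smooth_on_powr) auto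
  fix z assume "z \<in> S"
  with assms(2)[of z] show "G z powr (1/2) = sqrt (G z)" by (simp add: powr_half_sqrt)
qed

lemma ddir_chain:
  assumes "dir_differentiable_on S F" "x \<in> S" "(\<phi> has_real_derivative \<phi>') (at (F x))"
  shows "ddir v (\<lambda>z. \<phi> (F z)) x = \<phi>' * ddir v F x"
proof -
  have "((\<lambda>s. \<phi> (F (x + s *\<^sub>R v))) has_real_derivative \<phi>' * ddir v F x) (at 0)"
    by (rule DERIV_chain2[OF _ has_ddir[OF assms(1,2)]]) (use assms(3) in simp)
  then show ?thesis unfolding ddir_def[of v "\<lambda>z. \<phi> (F z)"] by (rule DERIV_imp_deriv)
qed

lemma ddir_cmult:
  "dir_differentiable_on S F \<Longrightarrow> x \<in> S \<Longrightarrow> ddir v (\<lambda>z. c * F z) x = c * ddir v F x"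
  using ddir_mult[OF dir_differentiable_on_const] by (simp add: ddir_const)

lemma ddir_minus:
  "dir_differentiable_on S F \<Longrightarrow> x \<in> S \<Longrightarrow> ddir v (\<lambda>z. - F z) x = - ddir v F x"
  using ddir_cmult[of S F x v "-1"] by simp

lemma ddir_diff:
  assumes "dir_differentiable_on S F" "dir_differentiable_on S G" "x \<in> S"
  shows "ddir v (\<lambda>z. F z - G z) x = ddir v F x - ddir v G x"
proof -
  have "dir_differentiable_on S (\<lambda>z. - G z)"
    using dir_differentiable_on_mult[OF dir_differentiable_on_const assms(2), of "-1"] by simp
  then show ?thesis
    using ddir_add[OF assms(1) _ assms(3), of "\<lambda>z. - G z" v] ddir_minus[OF assms(2,3), of v] by simp
qed

lemma ddir_divide_const:
  "dir_differentiable_on S F \<Longrightarrow> x \<in> S \<Longrightarrow> ddir v (\<lambda>z. F z / c) x = ddir v F x / c"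
  using ddir_cmult[of S F x v "1/c"] by simp

lemma dir_differentiable_on_sum:
  "finite I \<Longrightarrow> (\<And>i. i \<in> I \<Longrightarrow> dir_differentiable_on S (f i)) \<Longrightarrow>
   dir_differentiable_on S (\<lambda>z. \<Sum>i\<in>I. f i z)"
  by (induction I rule: finite_induct) (simp_all add: dir_differentiable_on_const dir_differentiable_on_add)

lemma ddir_sum:
  assumes "finite I" "\<And>i. i \<in> I \<Longrightarrow> dir_differentiable_on S (f i)" "x \<in> S"
  shows "ddir v (\<lambda>z. \<Sum>i\<in>I. f i z) x = (\<Sum>i\<in>I. ddir v (f i) x)"
  using assms
proof (induction I rule: finite_induct)
  case (insert a I)
  then have "ddir v (\<lambda>z. f a z + (\<Sum>i\<in>I. f i z)) x = ddir v (f a) x + ddir v (\<lambda>z. \<Sum>i\<in>I. f i z) x"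
    by (intro ddir_add dir_differentiable_on_sum) auto
  with insert show ?case by simp
qed (simp add: ddir_const)
section \<open>Symmetry of second derivatives\<close>

lemma integral_mixed_partial:
  fixes f fa fb fab :: "real \<Rightarrow> real \<Rightarrow> real"
  assumes \<delta>: "0 < \<delta>"
    and fa: "\<And>a b. \<bar>a\<bar> \<le> \<delta> \<Longrightarrow> \<bar>b\<bar> \<le> \<delta> \<Longrightarrow> ((\<lambda>a. f a b) has_real_derivative fa a b) (at a)"
    and fb: "\<And>a b. \<bar>a\<bar> \<le> \<delta> \<Longrightarrow> \<bar>b\<bar> \<le> \<delta> \<Longrightarrow> ((\<lambda>b. f a b) has_real_derivative fb a b) (at b)"
    and fab: "\<And>a b. \<bar>a\<bar> \<le> \<delta> \<Longrightarrow> \<bar>b\<bar> \<le> \<delta> \<Longrightarrow> ((\<lambda>b. fa a b) has_real_derivative fab a b) (at b)"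
    and cont_fa: "continuous_on ({-\<delta>..\<delta>} \<times> {-\<delta>..\<delta>}) (\<lambda>(a, b). fa a b)"
    and cont_fab: "continuous_on ({-\<delta>..\<delta>} \<times> {-\<delta>..\<delta>}) (\<lambda>(a, b). fab a b)"
    and a: "\<bar>a\<bar> \<le> \<delta>"
  shows "fb a 0 - fb (-\<delta>) 0 = integral {-\<delta>..a} (\<lambda>\<tau>. fab \<tau> 0)"
proof -
  \<comment> \<open>Differentiate the identity \<Phi> b = f a b - f (-\<delta>) b (FTC in a) at b = 0, under the
      integral sign on the left.\<close>
  define \<Phi> where "\<Phi> b = integral {-\<delta>..a} (\<lambda>\<tau>. fa \<tau> b)" for b
  have ftc: "\<Phi> b = f a b - f (-\<delta>) b" if b: "b \<in> {-\<delta><..<\<delta>}" for b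
  proof -
    have "((\<lambda>\<tau>. fa \<tau> b) has_integral (f a b - f (-\<delta>) b)) {-\<delta>..a}"
    proof (rule fundamental_theorem_of_calculus)
      fix \<tau> assume "\<tau> \<in> {-\<delta>..a}"
      then have "((\<lambda>a. f a b) has_real_derivative fa \<tau> b) (at \<tau>)"
        using a b by (intro fa) auto
      then show "((\<lambda>a. f a b) has_vector_derivative fa \<tau> b) (at \<tau> within {-\<delta>..a})"
        by (simp add: has_real_derivative_iff_has_vector_derivative[symmetric]
              has_field_derivative_at_within)
    qed (use a in simp)
    then show ?thesis unfolding \<Phi>_def by (rule integral_unique)
  qed
  have "(\<Phi> has_real_derivative integral (cbox (-\<delta>) a) (\<lambda>\<tau>. fab \<tau> 0)) (at 0 within {-\<delta><..<\<delta>})"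
    unfolding \<Phi>_def box_real(2)[symmetric]
  proof (rule leibniz_rule_field_derivative[where fx="\<lambda>b \<tau>. fab \<tau> b"])
    fix b \<tau> assume "b \<in> {-\<delta><..<\<delta>}" "\<tau> \<in> cbox (-\<delta>) a"
    then have "((\<lambda>b. fa \<tau> b) has_real_derivative fab \<tau> b) (at b)"
      using a by (intro fab) auto
    then show "((\<lambda>b. fa \<tau> b) has_real_derivative fab \<tau> b) (at b within {-\<delta><..<\<delta>})"
      by (rule has_field_derivative_at_within)
  next
    fix b assume "b \<in> {-\<delta><..<\<delta>}"
    then have "continuous_on (cbox (-\<delta>) a) (\<lambda>\<tau>. (\<lambda>(a, b). fa a b) (\<tau>, b))"
      using a by (intro continuous_on_compose2[OF cont_fa]) (auto intro!: continuous_intros)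
    then show "(\<lambda>\<tau>. fa \<tau> b) integrable_on cbox (-\<delta>) a"
      by (simp add: integrable_continuous_real)
  next
    have "continuous_on ({-\<delta><..<\<delta>} \<times> cbox (-\<delta>) a) (\<lambda>x. (\<lambda>(a, b). fab a b) (snd x, fst x))"
      using a by (intro continuous_on_compose2[OF cont_fab]) (auto intro!: continuous_intros)
    then show "continuous_on ({-\<delta><..<\<delta>} \<times> cbox (-\<delta>) a) (\<lambda>(b, \<tau>). fab \<tau> b)"
      by (simp add: case_prod_beta)
  qed (use \<delta> in auto)
  then have "(\<Phi> has_real_derivative integral {-\<delta>..a} (\<lambda>\<tau>. fab \<tau> 0)) (at 0)"
    using at_within_open[of 0 "{-\<delta><..<\<delta>}"] \<delta> by simp
  moreover have "((\<lambda>b. f a b - f (-\<delta>) b) has_real_derivative fb a 0 - fb (-\<delta>) 0) (at 0)"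
    using a \<delta> by (intro DERIV_diff fb) auto
  then have "(\<Phi> has_real_derivative fb a 0 - fb (-\<delta>) 0) (at 0)"
    by (rule has_field_derivative_transform_within_open[where S="{-\<delta><..<\<delta>}"])
       (use \<delta> ftc in auto)
  ultimately show ?thesis by (rule DERIV_unique[symmetric])
qed

lemma mixed_partials_commute:
  fixes f fa fb fab fba :: "real \<Rightarrow> real \<Rightarrow> real"
  assumes \<delta>: "0 < \<delta>"
    and fa: "\<And>a b. \<bar>a\<bar> \<le> \<delta> \<Longrightarrow> \<bar>b\<bar> \<le> \<delta> \<Longrightarrow> ((\<lambda>a. f a b) has_real_derivative fa a b) (at a)"
    and fb: "\<And>a b. \<bar>a\<bar> \<le> \<delta> \<Longrightarrow> \<bar>b\<bar> \<le> \<delta> \<Longrightarrow> ((\<lambda>b. f a b) has_real_derivative fb a b) (at b)"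
    and fab: "\<And>a b. \<bar>a\<bar> \<le> \<delta> \<Longrightarrow> \<bar>b\<bar> \<le> \<delta> \<Longrightarrow> ((\<lambda>b. fa a b) has_real_derivative fab a b) (at b)"
    and fba: "\<And>a b. \<bar>a\<bar> \<le> \<delta> \<Longrightarrow> \<bar>b\<bar> \<le> \<delta> \<Longrightarrow> ((\<lambda>a. fb a b) has_real_derivative fba a b) (at a)"
    and cont_fa: "continuous_on ({-\<delta>..\<delta>} \<times> {-\<delta>..\<delta>}) (\<lambda>(a, b). fa a b)"
    and cont_fab: "continuous_on ({-\<delta>..\<delta>} \<times> {-\<delta>..\<delta>}) (\<lambda>(a, b). fab a b)"
  shows "fab 0 0 = fba 0 0"
proof -
  have "continuous_on {-\<delta>..\<delta>} (\<lambda>\<tau>. (\<lambda>(a, b). fab a b) (\<tau>, 0))"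
    using \<delta> by (intro continuous_on_compose2[OF cont_fab]) (auto intro!: continuous_intros)
  then have "((\<lambda>a. integral {-\<delta>..a} (\<lambda>\<tau>. fab \<tau> 0)) has_vector_derivative fab 0 0)
      (at 0 within {-\<delta>..\<delta>})"
    using \<delta> by (intro integral_has_vector_derivative) auto
  then have "((\<lambda>a. integral {-\<delta>..a} (\<lambda>\<tau>. fab \<tau> 0)) has_real_derivative fab 0 0) (at 0)"
    using at_within_Icc_at[of "-\<delta>" 0 \<delta>] \<delta>
    by (simp add: has_real_derivative_iff_has_vector_derivative)
  moreover have "((\<lambda>a. integral {-\<delta>..a} (\<lambda>\<tau>. fab \<tau> 0)) has_real_derivative fba 0 0) (at 0)"
  proof (rule has_field_derivative_transform_within_open[of "\<lambda>a. fb a 0 - fb (-\<delta>) 0"])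
    show "((\<lambda>a. fb a 0 - fb (-\<delta>) 0) has_real_derivative fba 0 0) (at 0)"
      using DERIV_diff[OF fba[of 0 0] DERIV_const] \<delta> by simp
    show "fb a 0 - fb (-\<delta>) 0 = integral {-\<delta>..a} (\<lambda>\<tau>. fab \<tau> 0)" if "a \<in> {-\<delta><..<\<delta>}" for a
      using that by (intro integral_mixed_partial[OF \<delta> fa fb fab cont_fa cont_fab]) auto
  qed (use \<delta> in auto)
  ultimately show ?thesis by (rule DERIV_unique)
qed

lemma open_contains_parallelogram:
  fixes z v w :: "'a::real_normed_vector"
  assumes "open S" "z \<in> S"
  obtains \<delta> where "0 < \<delta>" "\<And>a b. \<bar>a\<bar> \<le> \<delta> \<Longrightarrow> \<bar>b\<bar> \<le> \<delta> \<Longrightarrow> z + a *\<^sub>R v + b *\<^sub>R w \<in> S"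
proof -
  obtain r where r: "0 < r" "ball z r \<subseteq> S"
    using assms open_contains_ball by blast
  define K where "K = norm v + norm w + 1"
  have K: "0 < K" "norm v + norm w < 2 * K" unfolding K_def by (simp_all add: add_nonneg_pos)
  define \<delta> where "\<delta> = r / (2 * K)"
  have "z + a *\<^sub>R v + b *\<^sub>R w \<in> S" if "\<bar>a\<bar> \<le> \<delta>" "\<bar>b\<bar> \<le> \<delta>" for a b
  proof -
    have "norm (a *\<^sub>R v + b *\<^sub>R w) \<le> \<bar>a\<bar> * norm v + \<bar>b\<bar> * norm w"
      using norm_triangle_ineq[of "a *\<^sub>R v" "b *\<^sub>R w"] by simp
    also have "\<dots> \<le> \<delta> * norm v + \<delta> * norm w"
      using that by (intro add_mono mult_right_mono) auto
    also have "\<dots> < r"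
    proof -
      have "r * (norm v + norm w) < r * (2 * K)" using r K by simp
      then show ?thesis unfolding \<delta>_def using K by (simp add: field_simps)
    qed
    finally have "dist (z + a *\<^sub>R v + b *\<^sub>R w) z < r" unfolding dist_norm by (simp add: algebra_simps)
    then show ?thesis using r by (auto simp: dist_commute)
  qed
  moreover have "0 < \<delta>" unfolding \<delta>_def using r K by simp
  ultimately show ?thesis using that by blast
qed

lemma ddir_commute:
  assumes F: "smooth_on S F" and z: "z \<in> S"
  shows "ddir v (ddir w F) z = ddir w (ddir v F) z"
proof -
  obtain \<delta> where \<delta>: "0 < \<delta>"
    and p_in_S: "\<And>a b. \<bar>a\<bar> \<le> \<delta> \<Longrightarrow> \<bar>b\<bar> \<le> \<delta> \<Longrightarrow> z + a *\<^sub>R v + b *\<^sub>R w \<in> S"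
    using open_contains_parallelogram[OF smooth_on_open[OF F] z] by blast
  define p where "p a b = z + a *\<^sub>R v + b *\<^sub>R w" for a b :: real
  have da: "((\<lambda>a. G (p a b)) has_real_derivative ddir v G (p a b)) (at a)"
    if "smooth_on S G" "\<bar>a\<bar> \<le> \<delta>" "\<bar>b\<bar> \<le> \<delta>" for G a b
    using smooth_on_has_ddir_at[OF that(1), of "z + b *\<^sub>R w" a v] p_in_S[OF that(2,3)]
    unfolding p_def by (simp add: algebra_simps)
  have db: "((\<lambda>b. G (p a b)) has_real_derivative ddir w G (p a b)) (at b)"
    if "smooth_on S G" "\<bar>a\<bar> \<le> \<delta>" "\<bar>b\<bar> \<le> \<delta>" for G a b
    using smooth_on_has_ddir_at[OF that(1), of "z + a *\<^sub>R v" b w] p_in_S[OF that(2,3)]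
    unfolding p_def by simp
  have cont: "continuous_on ({-\<delta>..\<delta>} \<times> {-\<delta>..\<delta>}) (\<lambda>(a, b). G (p a b))"
    if "smooth_on S G" for G
  proof -
    have "continuous_on ({-\<delta>..\<delta>} \<times> {-\<delta>..\<delta>}) (\<lambda>x. G (p (fst x) (snd x)))"
      by (rule continuous_on_compose2[OF smooth_on_continuous[OF that]])
         (use p_in_S in \<open>auto simp: p_def intro!: continuous_intros\<close>)
    then show ?thesis by (simp add: case_prod_beta)
  qed
  have Fv: "smooth_on S (ddir v F)" and Fw: "smooth_on S (ddir w F)"
    using F by (auto intro: smooth_on_ddir)
  have "ddir w (ddir v F) (p 0 0) = ddir v (ddir w F) (p 0 0)"
    by (rule mixed_partials_commute[OF \<delta> da[OF F] db[OF F] db[OF Fv] da[OF Fw] cont[OF Fv]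
          cont[OF smooth_on_ddir[OF Fv]]])
  then show ?thesis by (simp add: p_def)
qed

section \<open>Integration of periodic functions over the unit cube\<close>

lemma One_cart_nth [simp]: "(One::real^'n) $ j = 1"
  by (metis Cart_1 one_index)

lemma sum_Basis_cart_nth [simp]: "(\<Sum>x\<in>Basis. (x::real^'n) $ j) = 1"
  using One_cart_nth[of j] by simp

lemma mem_cbox_cut_cart:
  fixes x a b a' b' :: "real^'n"
  assumes o: "\<And>j. j \<noteq> i \<Longrightarrow> a' $ j = a $ j \<and> b' $ j = b $ j"
    and c: "\<And>t. (a $ i \<le> t \<and> t \<le> b $ i \<and> P t) \<longleftrightarrow> (a' $ i \<le> t \<and> t \<le> b' $ i)"
  shows "((\<forall>j. a $ j \<le> x $ j \<and> x $ j \<le> b $ j) \<and> P (x $ i)) \<longleftrightarrow>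
         (\<forall>j. a' $ j \<le> x $ j \<and> x $ j \<le> b' $ j)"
proof safe
  fix j assume A: "\<forall>j. a $ j \<le> x $ j \<and> x $ j \<le> b $ j" "P (x $ i)"
  show "a' $ j \<le> x $ j" "x $ j \<le> b' $ j"
    using spec[OF A(1), of j] A(2) o[of j] c[of "x $ i"] by (cases "j = i", auto)+
next
  fix j assume A: "\<forall>j. a' $ j \<le> x $ j \<and> x $ j \<le> b' $ j"
  show "a $ j \<le> x $ j" "x $ j \<le> b $ j"
    using spec[OF A, of j] o[of j] c[of "x $ i"] by (cases "j = i", auto)+
  show "P (x $ i)" using spec[OF A, of i] c[of "x $ i"] by simp
qed

lemma integral_translate_periodic:
  fixes F :: "real^'n \<Rightarrow> real"
  assumes cont: "continuous_on UNIV F" and per: "\<And>x. F (x + axis i 1) = F x"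
    and s: "0 \<le> s" "s \<le> 1"
  shows "integral (cbox 0 One) (\<lambda>x. F (x + s *\<^sub>R axis i 1)) = integral (cbox 0 One) F"
proof -
  define e :: "real^'n" where "e = axis i 1"
  define c :: "real^'n" where "c = s *\<^sub>R e"
  define h :: "real^'n" where "h = (\<chi> j. if j = i then s else 1)"
  have eB: "e \<in> Basis" unfolding e_def by simp
  have ie: "x \<bullet> e = x $ i" for x unfolding e_def by (simp add: inner_axis)
  have cj: "c $ j = (if j = i then s else 0)" for j unfolding c_def e_def by (simp add: axis_def)
  have ej: "e $ j = (if j = i then 1 else 0)" for j unfolding e_def by (simp add: axis_def)
  have hj: "h $ j = (if j = i then s else 1)" for j unfolding h_def by simp
  have int: "F integrable_on cbox a b" for a b
    by (rule integrable_continuous[OF continuous_on_subset[OF cont]]) simp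
  \<comment> \<open>The cube shifted by c is cut at x_i = 1 and its upper slab translated back by -e;
      the cube itself is cut at x_i = s. Both give the same two pieces.\<close>
  have B1: "cbox c (One + c) \<inter> {x. x \<bullet> e \<le> 1} = cbox c One"
    unfolding set_eq_iff mem_box_cart ie Int_iff mem_Collect_eq
    by (intro allI mem_cbox_cut_cart[where P="\<lambda>t. t \<le> 1"]) (use s in \<open>auto simp: cj\<close>)
  have B2: "cbox c (One + c) \<inter> {x. 1 \<le> x \<bullet> e} = cbox (0 + e) (h + e)"
    unfolding set_eq_iff mem_box_cart ie Int_iff mem_Collect_eq
    by (intro allI mem_cbox_cut_cart[where P="\<lambda>t. 1 \<le> t"]) (use s in \<open>auto simp: cj ej hj\<close>)
  have Q1: "cbox 0 One \<inter> {x. x \<bullet> e \<le> s} = cbox 0 h"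
    unfolding set_eq_iff mem_box_cart ie Int_iff mem_Collect_eq
    by (intro allI mem_cbox_cut_cart[where P="\<lambda>t. t \<le> s"]) (use s in \<open>auto simp: hj\<close>)
  have Q2: "cbox 0 One \<inter> {x. s \<le> x \<bullet> e} = cbox c One"
    unfolding set_eq_iff mem_box_cart ie Int_iff mem_Collect_eq
    by (intro allI mem_cbox_cut_cart[where P="\<lambda>t. s \<le> t"]) (use s in \<open>auto simp: cj\<close>)
  have "F \<circ> (+) e = F" using per by (auto simp: e_def add.commute)
  then have "((F \<circ> (+) e) has_integral integral (cbox 0 h) F) (cbox 0 h)"
    using int by (simp add: integrable_integral)
  then have Ih: "(F has_integral integral (cbox 0 h) F) (cbox (0 + e) (h + e))"
    by (simp only: has_integral_shift_cbox_iff)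
  have "(F has_integral (integral (cbox c One) F + integral (cbox 0 h) F)) (cbox c (One + c))"
    by (rule has_integral_split[OF _ _ eB, of F _ c "One + c" 1])
       (simp_all only: B1 B2 Ih integrable_integral[OF int])
  then have "((F \<circ> (+) c) has_integral (integral (cbox c One) F + integral (cbox 0 h) F)) (cbox 0 One)"
    by (simp only: has_integral_shift_cbox_iff add_0_left add.commute[of One])
  moreover have "F \<circ> (+) c = (\<lambda>x. F (x + s *\<^sub>R axis i 1))"
    by (auto simp: o_def c_def e_def add.commute)
  ultimately have "((\<lambda>x. F (x + s *\<^sub>R axis i 1)) has_integral
      (integral (cbox c One) F + integral (cbox 0 h) F)) (cbox 0 One)"
    by simp
  moreover have "(F has_integral (integral (cbox 0 h) F + integral (cbox c One) F)) (cbox 0 One)"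
    by (rule has_integral_split[OF _ _ eB, of F _ 0 One s])
       (simp_all only: Q1 Q2 integrable_integral[OF int])
  ultimately show ?thesis by (simp add: integral_unique add.commute)
qed

lemma integral_derivative_periodic:
  fixes F dF :: "real^'n \<Rightarrow> real"
  assumes cF: "continuous_on UNIV F" and cdF: "continuous_on UNIV dF"
    and der: "\<And>x. ((\<lambda>s. F (x + s *\<^sub>R axis i 1)) has_real_derivative dF x) (at 0)"
    and per: "\<And>x. F (x + axis i 1) = F x"
    and perd: "\<And>x. dF (x + axis i 1) = dF x"
  shows "integral (cbox 0 One) dF = 0"
proof -
  define e :: "real^'n" where "e = axis i 1"
  \<comment> \<open>G is constant by translation invariance, and G' is a translate of the integral of dF.\<close>
  define G where "G s = integral (cbox 0 One) (\<lambda>x. F (x + s *\<^sub>R e))" for s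
  have "(G has_real_derivative integral (cbox 0 One) (\<lambda>x. dF (x + (1/2) *\<^sub>R e)))
      (at (1/2) within {0<..<1})"
    unfolding G_def
  proof (rule leibniz_rule_field_derivative[where fx="\<lambda>s x. dF (x + s *\<^sub>R e)"])
    fix s x
    have "(\<lambda>s'. F ((x + s *\<^sub>R e) + s' *\<^sub>R e)) = (\<lambda>s'. F (x + (s' + s) *\<^sub>R e))"
      by (simp add: scaleR_add_left add_ac)
    then have "((\<lambda>s'. F (x + (s' + s) *\<^sub>R e)) has_real_derivative dF (x + s *\<^sub>R e)) (at 0)"
      using der[of "x + s *\<^sub>R e"] by (simp add: e_def)
    then have "((\<lambda>s. F (x + s *\<^sub>R e)) has_real_derivative dF (x + s *\<^sub>R e)) (at s)"
      using DERIV_shift[of "\<lambda>s. F (x + s *\<^sub>R e)" _ 0 s] by simp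
    then show "((\<lambda>s. F (x + s *\<^sub>R e)) has_real_derivative dF (x + s *\<^sub>R e)) (at s within {0<..<1})"
      by (rule has_field_derivative_at_within)
  next
    fix s :: real
    have "continuous_on (cbox 0 One) (\<lambda>x. F (x + s *\<^sub>R e))"
      by (rule continuous_on_compose2[OF cF]) (auto intro!: continuous_intros)
    then show "(\<lambda>x. F (x + s *\<^sub>R e)) integrable_on cbox 0 One" by (rule integrable_continuous)
  next
    have "continuous_on ({0<..<1} \<times> cbox 0 One) (\<lambda>z. dF (snd z + fst z *\<^sub>R e))"
      by (rule continuous_on_compose2[OF cdF]) (auto intro!: continuous_intros)
    then show "continuous_on ({0<..<1} \<times> cbox 0 One) (\<lambda>(s, x). dF (x + s *\<^sub>R e))"
      by (simp add: case_prod_beta)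
  qed auto
  then have "(G has_real_derivative integral (cbox 0 One) (\<lambda>x. dF (x + (1/2) *\<^sub>R e))) (at (1/2))"
    using at_within_open[of "1/2::real" "{0<..<1}"] by simp
  moreover have "(G has_real_derivative 0) (at (1/2))"
    by (rule has_field_derivative_transform_within_open[OF DERIV_const, of "{0<..<1}"])
       (auto simp: G_def e_def integral_translate_periodic[OF cF per])
  ultimately have "integral (cbox 0 One) (\<lambda>x. dF (x + (1/2) *\<^sub>R e)) = 0"
    by (rule DERIV_unique)
  then show ?thesis
    unfolding e_def by (simp add: integral_translate_periodic[OF cdF perd])
qed

section \<open>Finite combinations of powers\<close>

definition powr_comb :: "(real \<times> real) list \<Rightarrow> real \<Rightarrow> real" where
  "powr_comb L r = sum_list (map (\<lambda>(a, s). a * r powr s) L)"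

definition powr_comb_deriv :: "(real \<times> real) list \<Rightarrow> (real \<times> real) list" where
  "powr_comb_deriv L = map (\<lambda>(a, s). (a * s, s - 1)) L"

lemma powr_comb_Nil [simp]: "powr_comb [] r = 0"
  by (simp add: powr_comb_def)

lemma powr_comb_Cons [simp]: "powr_comb ((a, s) # L) r = a * r powr s + powr_comb L r"
  by (simp add: powr_comb_def)

lemma powr_comb_deriv_Nil [simp]: "powr_comb_deriv [] = []"
  by (simp add: powr_comb_deriv_def)

lemma powr_comb_deriv_Cons [simp]:
  "powr_comb_deriv ((a, s) # L) = (a * s, s - 1) # powr_comb_deriv L"
  by (simp add: powr_comb_deriv_def)

lemma has_real_derivative_powr_comb:
  "0 < r \<Longrightarrow> (powr_comb L has_real_derivative powr_comb (powr_comb_deriv L) r) (at r)"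
proof (induction L)
  case Nil then show ?case by (simp add: powr_comb_def[abs_def])
next
  case (Cons p L)
  obtain a s where p: "p = (a, s)" by force
  have "((\<lambda>r. a * r powr s + powr_comb L r) has_real_derivative
      a * (s * r powr (s - 1)) + powr_comb (powr_comb_deriv L) r) (at r)"
    by (intro DERIV_add DERIV_cmult has_real_derivative_powr Cons)
  then show ?case unfolding p by (simp add: mult.assoc)
qed

lemma smooth_on_powr_comb:
  "smooth_on S R \<Longrightarrow> (\<And>z. z \<in> S \<Longrightarrow> 0 < R z) \<Longrightarrow> smooth_on S (\<lambda>z. powr_comb L (R z))"
proof (induction L)
  case Nil then show ?case by (simp add: smooth_on_const smooth_on_open)
next
  case (Cons p L)
  obtain a s where p: "p = (a, s)" by force
  have "smooth_on S (\<lambda>z. a * R z powr s + powr_comb L (R z))"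
    by (intro smooth_on_add smooth_on_cmult smooth_on_powr Cons) (use Cons in auto)
  then show ?case unfolding p by simp
qed

lemma smooth_on_comp_powr_comb:
  assumes "\<And>r. 0 < r \<Longrightarrow> \<phi> r = powr_comb L r" "smooth_on S R" "\<And>z. z \<in> S \<Longrightarrow> 0 < R z"
  shows "smooth_on S (\<lambda>z. \<phi> (R z))"
  by (rule smooth_on_cong[OF smooth_on_powr_comb[OF assms(2,3)]]) (use assms in auto)

lemma has_real_derivative_eq_powr_comb:
  assumes "\<And>r. 0 < r \<Longrightarrow> \<phi> r = powr_comb L r" "0 < r"
  shows "(\<phi> has_real_derivative powr_comb (powr_comb_deriv L) r) (at r)"
  by (rule has_field_derivative_transform_within_open[OF has_real_derivative_powr_comb[OF assms(2)],
        of "{0<..}"])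
     (use assms in auto)

lemma ddir_comp_powr_comb:
  assumes "\<And>r. 0 < r \<Longrightarrow> \<phi> r = powr_comb L r" "smooth_on S R" "z \<in> S" "0 < R z"
  shows "ddir v (\<lambda>z. \<phi> (R z)) z = powr_comb (powr_comb_deriv L) (R z) * ddir v R z"
  by (rule ddir_chain[OF smooth_on_dir_differentiable[OF assms(2)] assms(3)
        has_real_derivative_eq_powr_comb[OF assms(1,4)]])

definition h_terms :: "real \<Rightarrow> real \<Rightarrow> (real \<times> real) list" where
  "h_terms \<epsilon> \<gamma> = [(1, 1), (\<epsilon>, 7/8), (\<epsilon>, \<gamma>)]"

lemma hfun_eq_powr_comb: "0 < r \<Longrightarrow> hfun \<epsilon> \<gamma> r = powr_comb (h_terms \<epsilon> \<gamma>) r"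
  by (simp add: hfun_def h_terms_def)

lemma hp_eq_powr_comb: "0 < r \<Longrightarrow> hp \<epsilon> \<gamma> r = powr_comb (powr_comb_deriv (h_terms \<epsilon> \<gamma>)) r"
  unfolding hp_def by (rule DERIV_imp_deriv[OF has_real_derivative_eq_powr_comb[OF hfun_eq_powr_comb]])

lemma hp_eq: "0 < r \<Longrightarrow> hp \<epsilon> \<gamma> r = 1 + \<epsilon> * (7/8) * r powr (-1/8) + \<epsilon> * \<gamma> * r powr (\<gamma> - 1)"
  by (simp add: hp_eq_powr_comb h_terms_def)

definition g_terms :: "real \<Rightarrow> real \<Rightarrow> (real \<times> real) list" where
  "g_terms \<epsilon> \<gamma> = [(- \<epsilon> / 8, 7/8), (\<epsilon> * (\<gamma> - 1), \<gamma>)]"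

lemma gfun_eq_powr_comb:
  assumes r: "0 < r"
  shows "gfun \<epsilon> \<gamma> r = powr_comb (g_terms \<epsilon> \<gamma>) r"
proof -
  have "gfun \<epsilon> \<gamma> r = \<epsilon> * (7/8) * (r * r powr (-1/8)) + \<epsilon> * \<gamma> * (r * r powr (\<gamma> - 1))
          - \<epsilon> * r powr (7/8) - \<epsilon> * r powr \<gamma>"
    unfolding gfun_def hp_eq[OF r] hfun_def by (simp add: algebra_simps)
  also have "\<dots> = powr_comb (g_terms \<epsilon> \<gamma>) r"
    using r by (simp add: powr_mult_base g_terms_def algebra_simps)
  finally show ?thesis .
qed

definition ptil_terms :: "real \<Rightarrow> (real \<times> real) list" where
  "ptil_terms \<epsilon> = [(lam \<epsilon>, 1 / \<epsilon>\<^sup>2), (lam \<epsilon>, - 1 / \<epsilon>\<^sup>2)]"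

lemma ptil_eq_powr_comb: "0 < r \<Longrightarrow> ptil \<epsilon> r = powr_comb (ptil_terms \<epsilon>) r"
  by (simp add: ptil_def ptil_terms_def algebra_simps)

lemma sqrt_eq_powr_comb: "0 < r \<Longrightarrow> sqrt r = powr_comb [(1, 1/2)] r"
  by (simp add: powr_half_sqrt)

text \<open>\<Phi> with \<Phi>' = h'/(2 sqrt r), so that h'(\<rho>) \<nabla>sqrt \<rho> = \<nabla>\<Phi>(\<rho>).\<close>

definition Phi_terms :: "real \<Rightarrow> real \<Rightarrow> (real \<times> real) list" where
  "Phi_terms \<epsilon> \<gamma> = [(1, 1/2), (7 * \<epsilon> / 6, 3/8), (\<epsilon> * \<gamma> / (2 * \<gamma> - 1), \<gamma> - 1/2)]"

lemma powr_comb_deriv_Phi_terms: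
  assumes r: "0 < r" and \<gamma>: "1 < \<gamma>"
  shows "powr_comb (powr_comb_deriv (Phi_terms \<epsilon> \<gamma>)) r = hp \<epsilon> \<gamma> r / (2 * sqrt r)"
proof -
  have inv_sqrt: "1 / sqrt r = r powr (-1/2)"
    using r by (simp add: powr_minus_divide powr_half_sqrt)
  have "hp \<epsilon> \<gamma> r / (2 * sqrt r) =
      (1 + \<epsilon> * (7/8) * r powr (-1/8) + \<epsilon> * \<gamma> * r powr (\<gamma> - 1)) * (1 / sqrt r) / 2"
    unfolding hp_eq[OF r] by simp
  also have "\<dots> = (r powr (-1/2) + \<epsilon> * (7/8) * (r powr (-1/8) * r powr (-1/2))
        + \<epsilon> * \<gamma> * (r powr (\<gamma> - 1) * r powr (-1/2))) / 2"
    unfolding inv_sqrt by (simp add: algebra_simps)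
  also have "\<dots> = (r powr (-1/2) + \<epsilon> * (7/8) * r powr (-5/8) + \<epsilon> * \<gamma> * r powr (\<gamma> - 3/2)) / 2"
    by (simp add: powr_add[symmetric])
  also have "\<dots> = powr_comb (powr_comb_deriv (Phi_terms \<epsilon> \<gamma>)) r"
    using \<gamma> by (simp add: Phi_terms_def field_simps)
  finally show ?thesis by simp
qed

text \<open>The terms of f and of p, scaled by c = \<mu> \<lambda>; ffun has junk values where an
  exponent equals 1.\<close>

definition ffun_terms :: "real \<Rightarrow> (real \<times> real) list \<Rightarrow> (real \<times> real) list" where
  "ffun_terms c L = map (\<lambda>(a, s). (c * (a / (s - 1)), s)) L"

definition scaled_terms :: "real \<Rightarrow> (real \<times> real) list \<Rightarrow> (real \<times> real) list" where
  "scaled_terms c L = map (\<lambda>(a, s). (c * a, s)) L"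

lemma powr_comb_ffun_terms:
  "c * sum_list (map (\<lambda>(a, s). a / (s - 1) * r powr s) L) = powr_comb (ffun_terms c L) r"
  by (induction L) (auto simp: ffun_terms_def algebra_simps)

lemma powr_comb_scaled_terms:
  "c * sum_list (map (\<lambda>(a, s). a * r powr s) L) = powr_comb (scaled_terms c L) r"
  by (induction L) (auto simp: scaled_terms_def algebra_simps)

lemma ffun_terms_second_deriv:
  assumes "\<forall>(a, s)\<in>set L. s \<noteq> 1" "0 < r"
  shows "r * powr_comb (powr_comb_deriv (powr_comb_deriv (ffun_terms c L))) r
       = powr_comb (powr_comb_deriv (scaled_terms c L)) r"
  using assms(1)
proof (induction L)
  case (Cons p L)
  obtain a s where p: "p = (a, s)" by force
  have s: "s \<noteq> 1" using Cons.prems p by auto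
  have "r * (c * (a / (s - 1)) * s * (s - 1) * r powr (s - 1 - 1)) = c * a * s * (r * r powr (s - 2))"
    using s by (simp add: field_simps)
  also have "\<dots> = c * a * s * r powr (s - 1)"
    using assms(2) by (simp add: powr_mult_base)
  finally show ?case using Cons by (simp add: p ffun_terms_def scaled_terms_def algebra_simps)
qed (simp add: ffun_terms_def scaled_terms_def)

definition internal_energy_terms :: "real \<Rightarrow> real \<Rightarrow> real \<Rightarrow> real \<Rightarrow> (real \<times> real) list" where
  "internal_energy_terms \<nu> \<kappa> \<epsilon> \<gamma> =
     (1 / (\<gamma> - 1), \<gamma>) # ffun_terms (mu \<nu> \<kappa> * lam \<epsilon>) (pterms \<epsilon> \<gamma>)"

definition pressure_terms :: "real \<Rightarrow> real \<Rightarrow> real \<Rightarrow> real \<Rightarrow> (real \<times> real) list" where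
  "pressure_terms \<nu> \<kappa> \<epsilon> \<gamma> = (1, \<gamma>) # scaled_terms (mu \<nu> \<kappa> * lam \<epsilon>) (pterms \<epsilon> \<gamma>)"

lemma internal_energy_eq_powr_comb:
  "r powr \<gamma> / (\<gamma> - 1) + ffun \<nu> \<kappa> \<epsilon> \<gamma> r = powr_comb (internal_energy_terms \<nu> \<kappa> \<epsilon> \<gamma>) r"
  using powr_comb_ffun_terms[of "mu \<nu> \<kappa> * lam \<epsilon>" r "pterms \<epsilon> \<gamma>"]
  by (simp add: ffun_def internal_energy_terms_def)

lemma pressure_eq_powr_comb:
  "r powr \<gamma> + pfun \<nu> \<kappa> \<epsilon> \<gamma> r = powr_comb (pressure_terms \<nu> \<kappa> \<epsilon> \<gamma>) r"
  using powr_comb_scaled_terms[of "mu \<nu> \<kappa> * lam \<epsilon>" r "pterms \<epsilon> \<gamma>"]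
  by (simp add: pfun_def pressure_terms_def)

lemma pterms_exponents_ne_1:
  assumes "0 < \<epsilon>" "\<epsilon> < 1/2" "\<epsilon>\<^sup>2 * (\<gamma> - 1) < 1" "1 < \<gamma>"
  shows "\<forall>(a, s)\<in>set (pterms \<epsilon> \<gamma>). s \<noteq> 1"
proof -
  have "\<epsilon>\<^sup>2 < (1/2)\<^sup>2" using assms by (intro power_strict_mono) auto
  then have "4 < 1 / \<epsilon>\<^sup>2" using assms(1) by (simp add: field_simps power2_eq_square)
  moreover have "\<gamma> - 1 < 1 / \<epsilon>\<^sup>2" using assms(1,3) by (simp add: field_simps)
  ultimately show ?thesis unfolding pterms_def using assms(4) by (auto simp: field_simps)
qed

lemma internal_energy_pressure_relation:
  assumes "\<forall>(a, s)\<in>set (pterms \<epsilon> \<gamma>). s \<noteq> 1" "0 < r" "1 < \<gamma>"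
  shows "r * powr_comb (powr_comb_deriv (powr_comb_deriv (internal_energy_terms \<nu> \<kappa> \<epsilon> \<gamma>))) r
       = powr_comb (powr_comb_deriv (pressure_terms \<nu> \<kappa> \<epsilon> \<gamma>)) r"
proof -
  have "r * (1 / (\<gamma> - 1) * \<gamma> * (\<gamma> - 1) * r powr (\<gamma> - 1 - 1)) = \<gamma> * (r * r powr (\<gamma> - 2))"
    using assms(3) by (simp add: field_simps)
  also have "\<dots> = \<gamma> * r powr (\<gamma> - 1)"
    using assms(2) by (simp add: powr_mult_base)
  finally show ?thesis
    using ffun_terms_second_deriv[OF assms(1,2)]
    by (simp add: internal_energy_terms_def pressure_terms_def algebra_simps)
qed

section \<open>Pointwise algebra of the energy balance\<close>

text \<open>Values at one point; du i j stands for the derivative of u_j in direction i.\<close>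

lemma stress_contraction:
  fixes du :: "'i::finite \<Rightarrow> 'i \<Rightarrow> real"
  shows "(\<Sum>i\<in>UNIV. \<Sum>j\<in>UNIV. (H * ((du j i + du i j) / 2)
            + (if i = j then G * (\<Sum>k\<in>UNIV. du k k) else 0)) * du i j)
    = H * (\<Sum>i\<in>UNIV. \<Sum>j\<in>UNIV. ((du j i + du i j) / 2) * ((du j i + du i j) / 2))
      + G * ((\<Sum>k\<in>UNIV. du k k) * (\<Sum>k\<in>UNIV. du k k))"
proof -
  define D where "D i j = (du j i + du i j) / 2" for i j
  define K where "K = (\<Sum>k\<in>UNIV. du k k)"
  have swap: "(\<Sum>i\<in>UNIV. \<Sum>j\<in>UNIV. D i j * du j i) = (\<Sum>i\<in>UNIV. \<Sum>j\<in>UNIV. D i j * du i j)"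
    by (subst sum.swap) (simp add: D_def add.commute)
  have "D i j * D i j = (D i j * du j i + D i j * du i j) / 2" for i j
    unfolding D_def[of i j] by (simp add: algebra_simps add_divide_distrib)
  then have D_sq: "(\<Sum>i\<in>UNIV. \<Sum>j\<in>UNIV. D i j * D i j) = (\<Sum>i\<in>UNIV. \<Sum>j\<in>UNIV. D i j * du i j)"
    by (simp only: sum_divide_distrib[symmetric] sum.distrib swap) simp
  have "(\<Sum>j\<in>UNIV. (if i = j then G * K else 0) * du i j) = G * K * du i i" for i
    by (simp add: if_distrib[of "\<lambda>x. x * _"] cong: if_cong)
  then have trace: "(\<Sum>i\<in>UNIV. \<Sum>j\<in>UNIV. (if i = j then G * K else 0) * du i j) = G * (K * K)"
    by (simp add: sum_distrib_left[symmetric] K_def)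
  have "(\<Sum>i\<in>UNIV. \<Sum>j\<in>UNIV. (H * D i j + (if i = j then G * K else 0)) * du i j)
      = H * (\<Sum>i\<in>UNIV. \<Sum>j\<in>UNIV. D i j * du i j)
        + (\<Sum>i\<in>UNIV. \<Sum>j\<in>UNIV. (if i = j then G * K else 0) * du i j)"
    by (simp add: distrib_right sum.distrib sum_distrib_left mult.assoc)
  then show ?thesis unfolding D_def[symmetric] K_def[symmetric] trace D_sq by simp
qed

lemma momentum_dot_velocity:
  fixes u ut dr dw :: "'i::finite \<Rightarrow> real" and du dS :: "'i \<Rightarrow> 'i \<Rightarrow> real"
  assumes cont: "rt + (\<Sum>i\<in>UNIV. dr i * u i + r * du i i) = 0"
    and mom: "\<And>j. rt * u j + r * ut j
        + (\<Sum>i\<in>UNIV. (dr i * u i + r * du i i) * u j + r * u i * du i j)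
        - 2 * nu * (\<Sum>i\<in>UNIV. dS i j) + p1 * dr j + pt * u j = k2 * (2 * r * dw j)"
  shows "r * (\<Sum>j\<in>UNIV. u j * ut j) + r * (\<Sum>i\<in>UNIV. u i * (\<Sum>j\<in>UNIV. u j * du i j))
       - 2 * nu * (\<Sum>i\<in>UNIV. \<Sum>j\<in>UNIV. dS i j * u j) + p1 * (\<Sum>i\<in>UNIV. dr i * u i)
       + pt * (\<Sum>j\<in>UNIV. u j * u j) = 2 * k2 * r * (\<Sum>i\<in>UNIV. u i * dw i)"
proof -
  have transport: "(\<Sum>i\<in>UNIV. (dr i * u i + r * du i i) * u j + r * u i * du i j)
      = - rt * u j + r * (\<Sum>i\<in>UNIV. u i * du i j)" for j
  proof -
    have "(\<Sum>i\<in>UNIV. dr i * u i + r * du i i) = - rt" using cont by linarith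
    then have "(\<Sum>i\<in>UNIV. (dr i * u i + r * du i i) * u j) = - rt * u j"
      by (simp add: sum_distrib_right[symmetric])
    then show ?thesis by (simp add: sum.distrib sum_distrib_left mult.assoc)
  qed
  have "r * (u j * ut j) + r * (u j * (\<Sum>i\<in>UNIV. u i * du i j))
      - 2 * nu * (\<Sum>i\<in>UNIV. dS i j * u j) + p1 * (dr j * u j) + pt * (u j * u j)
      = 2 * k2 * r * (u j * dw j)" for j
  proof -
    have "u j * (r * ut j + r * (\<Sum>i\<in>UNIV. u i * du i j) - 2 * nu * (\<Sum>i\<in>UNIV. dS i j)
        + p1 * dr j + pt * u j) = u j * (k2 * (2 * r * dw j))"
      using mom[of j] unfolding transport by simp
    then show ?thesis by (simp add: sum_distrib_left sum_distrib_right algebra_simps)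
  qed
  then have "(\<Sum>j\<in>UNIV. r * (u j * ut j) + r * (u j * (\<Sum>i\<in>UNIV. u i * du i j))
      - 2 * nu * (\<Sum>i\<in>UNIV. dS i j * u j) + p1 * (dr j * u j) + pt * (u j * u j))
      = (\<Sum>j\<in>UNIV. 2 * k2 * r * (u j * dw j))"
    by simp
  moreover have "(\<Sum>j\<in>UNIV. u j * (\<Sum>i\<in>UNIV. u i * du i j))
      = (\<Sum>i\<in>UNIV. u i * (\<Sum>j\<in>UNIV. u j * du i j))"
    unfolding sum_distrib_left by (subst sum.swap) (simp add: algebra_simps)
  moreover have "(\<Sum>j\<in>UNIV. \<Sum>i\<in>UNIV. dS i j * u j) = (\<Sum>i\<in>UNIV. \<Sum>j\<in>UNIV. dS i j * u j)"
    by (rule sum.swap)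
  ultimately show ?thesis
    by (simp add: sum.distrib sum_subtractf sum_distrib_left[symmetric])
qed

lemma energy_balance_algebra:
  fixes u ut dr dw Psi dPsi dPhi_t :: "'i::finite \<Rightarrow> real" and du S dS :: "'i \<Rightarrow> 'i \<Rightarrow> real"
    and dflux :: "'i \<Rightarrow> real"
  assumes dE: "dE = (rt * (\<Sum>j\<in>UNIV. u j * u j) + r * (\<Sum>j\<in>UNIV. 2 * (u j * ut j))) / 2 + q * rt
        + 2 * k2 * (\<Sum>i\<in>UNIV. 2 * (Psi i * dPhi_t i))"
    and dflux: "\<And>i. dflux i = 2 * nu * (\<Sum>j\<in>UNIV. dS i j * u j + S i j * du i j)
      - ((dr i * u i + r * du i i) * (\<Sum>j\<in>UNIV. u j * u j)
         + r * u i * (\<Sum>j\<in>UNIV. 2 * (u j * du i j))) / 2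
      - ((q2 * dr i * r + q * dr i) * u i + q * r * du i i)
      + 2 * k2 * ((dr i * u i + r * du i i) * w + r * u i * dw i)
      + 4 * k2 * (dPsi i * Phi_t + Psi i * dPhi_t i)"
    and cont: "rt + (\<Sum>i\<in>UNIV. dr i * u i + r * du i i) = 0"
    and mom: "\<And>j. rt * u j + r * ut j
        + (\<Sum>i\<in>UNIV. (dr i * u i + r * du i i) * u j + r * u i * du i j)
        - 2 * nu * (\<Sum>i\<in>UNIV. dS i j) + p1 * dr j + pt * u j = k2 * (2 * r * dw j)"
    and pressure: "r * q2 = p1"
    and Phi_t: "Phi_t * (\<Sum>i\<in>UNIV. dPsi i) = rt * w / 2"
    and diss: "(\<Sum>i\<in>UNIV. \<Sum>j\<in>UNIV. S i j * du i j) = D"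
  shows "dE = (\<Sum>i\<in>UNIV. dflux i) - 2 * nu * D - pt * (\<Sum>j\<in>UNIV. u j * u j)"
proof -
  define X where "X = (\<Sum>j\<in>UNIV. u j * u j)"
  define A2 where "A2 = (\<Sum>j\<in>UNIV. u j * ut j)"
  define A3 where "A3 = (\<Sum>i\<in>UNIV. u i * (\<Sum>j\<in>UNIV. u j * du i j))"
  define A4 where "A4 = (\<Sum>i\<in>UNIV. \<Sum>j\<in>UNIV. dS i j * u j)"
  define A6 where "A6 = (\<Sum>i\<in>UNIV. dr i * u i)"
  define A7 where "A7 = (\<Sum>i\<in>UNIV. u i * dw i)"
  define A8 where "A8 = (\<Sum>i\<in>UNIV. Psi i * dPhi_t i)"
  define A9 where "A9 = (\<Sum>i\<in>UNIV. dPsi i)"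
  define C where "C = (\<Sum>i\<in>UNIV. dr i * u i + r * du i i)"
  have sum_double: "(\<Sum>j\<in>UNIV. 2 * (f j)) = 2 * (\<Sum>j\<in>UNIV. f j)" for f :: "'i \<Rightarrow> real"
    by (simp add: sum_distrib_left)
  have dflux': "dflux i = 2 * nu * (\<Sum>j\<in>UNIV. dS i j * u j) + 2 * nu * (\<Sum>j\<in>UNIV. S i j * du i j)
     + (- X / 2) * (dr i * u i + r * du i i) + (- r) * (u i * (\<Sum>j\<in>UNIV. u j * du i j))
     + (- q2 * r) * (dr i * u i) + (- q) * (dr i * u i + r * du i i)
     + (2 * k2 * w) * (dr i * u i + r * du i i) + (2 * k2 * r) * (u i * dw i)
     + (4 * k2 * Phi_t) * dPsi i + (4 * k2) * (Psi i * dPhi_t i)" for i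
    unfolding dflux X_def sum_double sum.distrib by (simp add: field_simps)
  have sum_dflux: "(\<Sum>i\<in>UNIV. dflux i) = 2 * nu * A4 + 2 * nu * D + (- X / 2) * C + (- r) * A3
     + (- q2 * r) * A6 + (- q) * C + (2 * k2 * w) * C + (2 * k2 * r) * A7
     + (4 * k2 * Phi_t) * A9 + (4 * k2) * A8"
    unfolding dflux' sum.distrib sum_distrib_left[symmetric] A4_def diss[symmetric] C_def A3_def
      A6_def A7_def A9_def A8_def
    by simp
  have C: "C = - rt" using cont unfolding C_def by simp
  have "(\<Sum>i\<in>UNIV. dflux i) - 2 * nu * D - pt * X = 2 * (nu * A4) + (rt * X) / 2 - r * A3
     - q2 * r * A6 + q * rt - 2 * (k2 * w * rt) + 2 * (k2 * r * A7) + 4 * (k2 * Phi_t * A9)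
     + 4 * (k2 * A8) - pt * X"
    unfolding sum_dflux C by (simp add: algebra_simps)
  moreover have "r * A2 + r * A3 - 2 * (nu * A4) + p1 * A6 + pt * X = 2 * (k2 * r * A7)"
    using momentum_dot_velocity[OF cont mom]
    unfolding A2_def A3_def A4_def A6_def A7_def X_def by (simp add: algebra_simps)
  moreover have "q2 * r * A6 = p1 * A6" using pressure by (simp add: mult.commute)
  moreover have "k2 * w * rt = 2 * (k2 * Phi_t * A9)"
    using Phi_t unfolding A9_def by (simp add: algebra_simps)
  moreover have "dE = (rt * X) / 2 + r * A2 + q * rt + 4 * (k2 * A8)"
    unfolding dE X_def A2_def A8_def sum_double by (simp add: algebra_simps)
  ultimately show ?thesis unfolding X_def[symmetric] by linarith
qed

lemma dx_eq_ddir: "dx i (\<lambda>y. G (t, y)) x = ddir (0, axis i 1) G (t, x)"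
  unfolding dx_def ddir_def by simp

lemma dtime_eq_ddir: "dtime (\<lambda>s y. G (s, y)) t x = ddir (1, 0) G (t, x)"
proof -
  have "deriv (\<lambda>s. G (s + t, x)) 0 = deriv (\<lambda>s. G (s, x)) t"
    unfolding deriv_def using DERIV_shift[of "\<lambda>s. G (s, x)" _ 0 t] by simp
  then show ?thesis unfolding dtime_def ddir_def by (simp add: add.commute)
qed

lemma norm_square_cart: "(norm (v::real^'n))\<^sup>2 = (\<Sum>j\<in>UNIV. v $ j * v $ j)"
  by (simp add: power2_norm_eq_inner inner_vec_def)

locale smooth_solution_A =
  fixes \<nu> \<kappa> \<gamma> \<epsilon> T :: real and \<rho> :: "real \<Rightarrow> real^'n::finite \<Rightarrow> real"
    and u :: "real \<Rightarrow> real^'n \<Rightarrow> real^'n"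
  assumes solution: "is_smooth_solution_A \<nu> \<kappa> \<gamma> \<epsilon> T \<rho> u"
    and eps_bounds: "0 < \<epsilon>" "\<epsilon> < 1/2" "\<epsilon>\<^sup>2 * (\<gamma> - 1) < 1"
    and gamma_gt_1: "1 < \<gamma>"
begin

text \<open>Fields are functions of (t, x) on QT, and ddir along dir_t and dir_x i are the partial
  derivatives; this puts time and space derivatives into one calculus.\<close>

definition "QT = {0<..<T} \<times> (UNIV :: (real^'n) set)"
definition "dens = (\<lambda>(t, x). \<rho> t x)"
definition "vel j = (\<lambda>(t, x). u t x $ j)"
definition "dir_t = ((1::real), (0::real^'n))"
definition "dir_x i = ((0::real), (axis i 1 :: real^'n))"

lemma dens_apply [simp]: "dens (t, x) = \<rho> t x"
  by (simp add: dens_def)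

lemma vel_apply [simp]: "vel j (t, x) = u t x $ j"
  by (simp add: vel_def)

lemma mem_QT: "z \<in> QT \<longleftrightarrow> fst z \<in> {0<..<T}"
  unfolding QT_def by (cases z) auto

lemma open_QT: "open QT"
  unfolding QT_def by (intro open_Times) auto

lemma smooth_on_dens [simp]: "smooth_on QT dens"
  using solution unfolding is_smooth_solution_A_def QT_def dens_def by blast

lemma smooth_on_vel [simp]: "smooth_on QT (vel j)"
  using solution unfolding is_smooth_solution_A_def QT_def vel_def by blast

lemma dens_pos: "z \<in> QT \<Longrightarrow> 0 < dens z"
  using solution unfolding is_smooth_solution_A_def QT_def dens_def by auto

lemma smooth_on_QT_const [simp]: "smooth_on QT (\<lambda>_. c)"
  using smooth_on_const[OF open_QT] .

lemmas smooth_on_rules [simp] =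
  smooth_on_add smooth_on_mult smooth_on_diff smooth_on_minus smooth_on_divide_const smooth_on_ddir

lemma smooth_on_QT_sum [simp]:
  fixes f :: "'i::finite \<Rightarrow> real \<times> (real^'n) \<Rightarrow> real"
  shows "(\<And>i. smooth_on QT (f i)) \<Longrightarrow> smooth_on QT (\<lambda>z. \<Sum>i\<in>UNIV. f i z)"
  by (rule smooth_on_sum[OF _ open_QT]) auto

lemma ddir_QT_sum:
  fixes f :: "'i::finite \<Rightarrow> real \<times> (real^'n) \<Rightarrow> real"
  shows "(\<And>i. smooth_on QT (f i)) \<Longrightarrow> z \<in> QT \<Longrightarrow>
    ddir v (\<lambda>z. \<Sum>i\<in>UNIV. f i z) z = (\<Sum>i\<in>UNIV. ddir v (f i) z)"
  by (rule ddir_sum) (auto intro: smooth_on_dir_differentiable)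

lemmas ddir_QT_rules = ddir_add[where S=QT] ddir_mult[where S=QT] ddir_diff[where S=QT]
  ddir_minus[where S=QT] ddir_divide_const[where S=QT] ddir_QT_sum ddir_const
  smooth_on_dir_differentiable

definition "sqrt_dens = (\<lambda>z. sqrt (dens z))"
definition "hp_dens = (\<lambda>z. hp \<epsilon> \<gamma> (dens z))"
definition "h_dens = (\<lambda>z. hfun \<epsilon> \<gamma> (dens z))"
definition "g_dens = (\<lambda>z. gfun \<epsilon> \<gamma> (dens z))"
definition "Psi i = (\<lambda>z. hp_dens z * ddir (dir_x i) sqrt_dens z)"
definition "div_Psi = (\<lambda>z. \<Sum>i\<in>UNIV. ddir (dir_x i) (Psi i) z)"
definition "Bohm = (\<lambda>z. hp_dens z * div_Psi z / sqrt_dens z)"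
definition "sym_grad i j = (\<lambda>z. (ddir (dir_x j) (vel i) z + ddir (dir_x i) (vel j) z) / 2)"
definition "div_vel = (\<lambda>z. \<Sum>i\<in>UNIV. ddir (dir_x i) (vel i) z)"
definition "stress i j = (\<lambda>z. h_dens z * sym_grad i j z + (if i = j then g_dens z * div_vel z else 0))"
definition "pressure = (\<lambda>z. dens z powr \<gamma> + pfun \<nu> \<kappa> \<epsilon> \<gamma> (dens z))"
definition "internal_energy = (\<lambda>z. dens z powr \<gamma> / (\<gamma> - 1) + ffun \<nu> \<kappa> \<epsilon> \<gamma> (dens z))"
definition "enthalpy =
  (\<lambda>z. powr_comb (powr_comb_deriv (internal_energy_terms \<nu> \<kappa> \<epsilon> \<gamma>)) (dens z))"
definition "Phi = (\<lambda>z. powr_comb (Phi_terms \<epsilon> \<gamma>) (dens z))"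
definition "Phi_t = ddir dir_t Phi"
definition "energy = (\<lambda>z. dens z * (\<Sum>j\<in>UNIV. vel j z * vel j z) / 2 + internal_energy z
   + 2 * \<kappa>\<^sup>2 * (\<Sum>i\<in>UNIV. Psi i z * Psi i z))"
definition "energy_flux i = (\<lambda>z. - (dens z * vel i z * (\<Sum>j\<in>UNIV. vel j z * vel j z) / 2)
   + 2 * \<nu> * (\<Sum>j\<in>UNIV. stress i j z * vel j z) - enthalpy z * dens z * vel i z
   + 2 * \<kappa>\<^sup>2 * (dens z * vel i z * Bohm z) + 4 * \<kappa>\<^sup>2 * (Psi i z * Phi_t z))"

lemma smooth_on_sqrt_dens [simp]: "smooth_on QT sqrt_dens"
  unfolding sqrt_dens_def by (rule smooth_on_sqrt[OF smooth_on_dens dens_pos])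

lemma sqrt_dens_pos: "z \<in> QT \<Longrightarrow> 0 < sqrt_dens z"
  unfolding sqrt_dens_def using dens_pos by simp

lemma smooth_on_hp_dens [simp]: "smooth_on QT hp_dens"
  unfolding hp_dens_def by (rule smooth_on_comp_powr_comb[OF hp_eq_powr_comb smooth_on_dens dens_pos])

lemma smooth_on_h_dens [simp]: "smooth_on QT h_dens"
  unfolding h_dens_def by (rule smooth_on_comp_powr_comb[OF hfun_eq_powr_comb smooth_on_dens dens_pos])

lemma smooth_on_g_dens [simp]: "smooth_on QT g_dens"
  unfolding g_dens_def by (rule smooth_on_comp_powr_comb[OF gfun_eq_powr_comb smooth_on_dens dens_pos])

lemma smooth_on_ptil_dens [simp]: "smooth_on QT (\<lambda>z. ptil \<epsilon> (dens z))"
  by (rule smooth_on_comp_powr_comb[OF ptil_eq_powr_comb smooth_on_dens dens_pos])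

lemma smooth_on_Psi [simp]: "smooth_on QT (Psi i)"
  unfolding Psi_def by simp

lemma smooth_on_div_Psi [simp]: "smooth_on QT div_Psi"
  unfolding div_Psi_def by simp

lemma smooth_on_Bohm [simp]: "smooth_on QT Bohm"
  unfolding Bohm_def by (rule smooth_on_divide) (auto simp: sqrt_dens_pos)

lemma smooth_on_sym_grad [simp]: "smooth_on QT (sym_grad i j)"
  unfolding sym_grad_def by simp

lemma smooth_on_div_vel [simp]: "smooth_on QT div_vel"
  unfolding div_vel_def by simp

lemma smooth_on_stress [simp]: "smooth_on QT (stress i j)"
  unfolding stress_def by (intro smooth_on_rules smooth_on_if open_QT) simp_all

lemma smooth_on_internal_energy [simp]: "smooth_on QT internal_energy"
  unfolding internal_energy_def
  by (rule smooth_on_comp_powr_comb[OF internal_energy_eq_powr_comb smooth_on_dens dens_pos])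

lemma smooth_on_enthalpy [simp]: "smooth_on QT enthalpy"
  unfolding enthalpy_def by (rule smooth_on_powr_comb[OF smooth_on_dens dens_pos])

lemma smooth_on_Phi [simp]: "smooth_on QT Phi"
  unfolding Phi_def by (rule smooth_on_powr_comb[OF smooth_on_dens dens_pos])

lemma smooth_on_Phi_t [simp]: "smooth_on QT Phi_t"
  unfolding Phi_t_def by simp

lemma smooth_on_energy_flux [simp]: "smooth_on QT (energy_flux i)"
  unfolding energy_flux_def by simp

lemma smooth_on_energy [simp]: "smooth_on QT energy"
  unfolding energy_def by simp

lemma ddir_internal_energy: "z \<in> QT \<Longrightarrow> ddir v internal_energy z = enthalpy z * ddir v dens z"
  unfolding internal_energy_def enthalpy_def
  by (rule ddir_comp_powr_comb[OF internal_energy_eq_powr_comb smooth_on_dens _ dens_pos])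

lemma ddir_enthalpy:
  "z \<in> QT \<Longrightarrow> ddir v enthalpy z =
     powr_comb (powr_comb_deriv (powr_comb_deriv (internal_energy_terms \<nu> \<kappa> \<epsilon> \<gamma>))) (dens z)
     * ddir v dens z"
  unfolding enthalpy_def
  by (rule ddir_comp_powr_comb[where L="powr_comb_deriv (internal_energy_terms \<nu> \<kappa> \<epsilon> \<gamma>)",
        OF refl smooth_on_dens _ dens_pos])

lemma ddir_pressure:
  "z \<in> QT \<Longrightarrow>
   ddir v pressure z = powr_comb (powr_comb_deriv (pressure_terms \<nu> \<kappa> \<epsilon> \<gamma>)) (dens z) * ddir v dens z"
  unfolding pressure_def by (rule ddir_comp_powr_comb[OF pressure_eq_powr_comb smooth_on_dens _ dens_pos])

lemma ddir_Phi: "z \<in> QT \<Longrightarrow> ddir v Phi z = hp \<epsilon> \<gamma> (dens z) / (2 * sqrt (dens z)) * ddir v dens z"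
  unfolding Phi_def
  using ddir_comp_powr_comb[where L="Phi_terms \<epsilon> \<gamma>", OF refl smooth_on_dens _ dens_pos, of z v]
    powr_comb_deriv_Phi_terms[OF dens_pos gamma_gt_1]
  by simp

lemma ddir_sqrt_dens: "z \<in> QT \<Longrightarrow> ddir v sqrt_dens z = 1 / (2 * sqrt (dens z)) * ddir v dens z"
  unfolding sqrt_dens_def
  using ddir_comp_powr_comb[OF sqrt_eq_powr_comb smooth_on_dens _ dens_pos, of z v] dens_pos[of z]
  by (simp add: powr_minus_divide powr_half_sqrt)

lemma Psi_eq_ddir_Phi: "z \<in> QT \<Longrightarrow> Psi i z = ddir (dir_x i) Phi z"
  unfolding Psi_def hp_dens_def by (simp add: ddir_Phi ddir_sqrt_dens)

lemma ddir_t_Psi: "z \<in> QT \<Longrightarrow> ddir dir_t (Psi i) z = ddir (dir_x i) Phi_t z"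
proof -
  assume z: "z \<in> QT"
  have "ddir dir_t (Psi i) z = ddir dir_t (ddir (dir_x i) Phi) z"
    by (rule ddir_cong[OF open_QT z]) (simp add: Psi_eq_ddir_Phi)
  also have "\<dots> = ddir (dir_x i) Phi_t z"
    unfolding Phi_t_def by (rule ddir_commute[OF smooth_on_Phi z])
  finally show ?thesis .
qed

lemma Phi_t_eq: "z \<in> QT \<Longrightarrow> Phi_t z = hp \<epsilon> \<gamma> (dens z) / (2 * sqrt (dens z)) * ddir dir_t dens z"
  unfolding Phi_t_def by (rule ddir_Phi)

lemma dx_sqrt_eq: "dx i (\<lambda>w. sqrt (\<rho> t w)) y = ddir (dir_x i) sqrt_dens (t, y)"
  using dx_eq_ddir[of i sqrt_dens t y] by (simp add: sqrt_dens_def dir_x_def)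

lemma dx_Psi_eq:
  "dx i (\<lambda>z. hp \<epsilon> \<gamma> (\<rho> t z) * dx i (\<lambda>w. sqrt (\<rho> t w)) z) y = ddir (dir_x i) (Psi i) (t, y)"
  using dx_eq_ddir[of i "Psi i" t y] by (simp add: Psi_def hp_dens_def dir_x_def dx_sqrt_eq)

lemma dx_Bohm_eq:
  "dx j (\<lambda>y. hp \<epsilon> \<gamma> (\<rho> t y) *
      (\<Sum>i\<in>UNIV. dx i (\<lambda>z. hp \<epsilon> \<gamma> (\<rho> t z) * dx i (\<lambda>w. sqrt (\<rho> t w)) z) y)
      / sqrt (\<rho> t y)) x = ddir (dir_x j) Bohm (t, x)"
  using dx_eq_ddir[of j Bohm t x]
  by (simp add: Bohm_def hp_dens_def div_Psi_def sqrt_dens_def dir_x_def dx_Psi_eq)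

lemma dx_vel_eq: "dx i (\<lambda>y. u t y $ j) y = ddir (dir_x i) (vel j) (t, y)"
  using dx_eq_ddir[of i "vel j" t y] by (simp add: dir_x_def)

lemma Dsym_eq: "Dsym (u t) i j y = sym_grad i j (t, y)"
  by (simp add: Dsym_def sym_grad_def dx_vel_eq)

lemma divg_eq: "divg (u t) y = div_vel (t, y)"
  by (simp add: divg_def div_vel_def dx_vel_eq)

lemma dx_stress_eq:
  "dx i (\<lambda>y. hfun \<epsilon> \<gamma> (\<rho> t y) * Dsym (u t) i j y
      + (if i = j then gfun \<epsilon> \<gamma> (\<rho> t y) * divg (u t) y else 0)) x
   = ddir (dir_x i) (stress i j) (t, x)"
  using dx_eq_ddir[of i "stress i j" t x]
  by (simp add: stress_def h_dens_def g_dens_def dir_x_def Dsym_eq divg_eq cong: if_cong)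

lemma dx_pressure_eq:
  "dx j (\<lambda>y. \<rho> t y powr \<gamma> + pfun \<nu> \<kappa> \<epsilon> \<gamma> (\<rho> t y)) x = ddir (dir_x j) pressure (t, x)"
  using dx_eq_ddir[of j pressure t x] by (simp add: pressure_def dir_x_def)

lemma dx_momentum_eq:
  "dx i (\<lambda>y. \<rho> t y * u t y $ i) x = ddir (dir_x i) (\<lambda>z. dens z * vel i z) (t, x)"
  using dx_eq_ddir[of i "\<lambda>z. dens z * vel i z" t x] by (simp add: dir_x_def)

lemma dx_momentum_flux_eq:
  "dx i (\<lambda>y. \<rho> t y * u t y $ i * u t y $ j) x
   = ddir (dir_x i) (\<lambda>z. dens z * vel i z * vel j z) (t, x)"
  using dx_eq_ddir[of i "\<lambda>z. dens z * vel i z * vel j z" t x] by (simp add: dir_x_def)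

lemma dtime_rho_eq: "dtime \<rho> t x = ddir dir_t dens (t, x)"
  using dtime_eq_ddir[of dens t x] by (simp add: dir_t_def)

lemma dtime_momentum_eq:
  "dtime (\<lambda>s y. \<rho> s y * u s y $ j) t x = ddir dir_t (\<lambda>z. dens z * vel j z) (t, x)"
  using dtime_eq_ddir[of "\<lambda>z. dens z * vel j z" t x] by (simp add: dir_t_def)

lemma continuity_eq:
  assumes "z \<in> QT"
  shows "ddir dir_t dens z + (\<Sum>i\<in>UNIV. ddir (dir_x i) (\<lambda>z. dens z * vel i z) z) = 0"
proof -
  obtain t x where z: "z = (t, x)" by force
  with assms have "t \<in> {0<..<T}" by (simp add: mem_QT)
  then have "dtime \<rho> t x + (\<Sum>i\<in>UNIV. dx i (\<lambda>y. \<rho> t y * u t y $ i) x) = 0"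
    using solution unfolding is_smooth_solution_A_def by blast
  then show ?thesis unfolding z dtime_rho_eq dx_momentum_eq .
qed

lemma momentum_eq:
  assumes "z \<in> QT"
  shows "ddir dir_t (\<lambda>z. dens z * vel j z) z
      + (\<Sum>i\<in>UNIV. ddir (dir_x i) (\<lambda>z. dens z * vel i z * vel j z) z)
      - 2 * \<nu> * (\<Sum>i\<in>UNIV. ddir (dir_x i) (stress i j) z) + ddir (dir_x j) pressure z
      + ptil \<epsilon> (dens z) * vel j z
    = \<kappa>\<^sup>2 * (2 * dens z * ddir (dir_x j) Bohm z)"
proof -
  obtain t x where z: "z = (t, x)" by force
  with assms have "t \<in> {0<..<T}" by (simp add: mem_QT)
  then have "dtime (\<lambda>s y. \<rho> s y * u s y $ j) t x
       + (\<Sum>i\<in>UNIV. dx i (\<lambda>y. \<rho> t y * u t y $ i * u t y $ j) x)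
       - 2 * \<nu> * (\<Sum>i\<in>UNIV. dx i (\<lambda>y. hfun \<epsilon> \<gamma> (\<rho> t y) * Dsym (u t) i j y
              + (if i = j then gfun \<epsilon> \<gamma> (\<rho> t y) * divg (u t) y else 0)) x)
       + dx j (\<lambda>y. \<rho> t y powr \<gamma> + pfun \<nu> \<kappa> \<epsilon> \<gamma> (\<rho> t y)) x
       + ptil \<epsilon> (\<rho> t x) * u t x $ j
       = \<kappa>\<^sup>2 * (2 * \<rho> t x * dx j (\<lambda>y. hp \<epsilon> \<gamma> (\<rho> t y) *
             (\<Sum>i\<in>UNIV. dx i (\<lambda>z. hp \<epsilon> \<gamma> (\<rho> t z) * dx i (\<lambda>w. sqrt (\<rho> t w)) z) y)
             / sqrt (\<rho> t y)) x)"
    using solution unfolding is_smooth_solution_A_def by blast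
  then show ?thesis
    unfolding z dtime_momentum_eq dx_momentum_flux_eq dx_stress_eq dx_pressure_eq dx_Bohm_eq by simp
qed

lemma ddir_t_energy:
  assumes z: "z \<in> QT"
  shows "ddir dir_t energy z = (ddir dir_t dens z * (\<Sum>j\<in>UNIV. vel j z * vel j z)
      + dens z * (\<Sum>j\<in>UNIV. 2 * (vel j z * ddir dir_t (vel j) z))) / 2
      + enthalpy z * ddir dir_t dens z
      + 2 * \<kappa>\<^sup>2 * (\<Sum>i\<in>UNIV. 2 * (Psi i z * ddir (dir_x i) Phi_t z))"
  unfolding energy_def using z by (simp add: ddir_QT_rules ddir_internal_energy ddir_t_Psi)

lemma ddir_x_energy_flux:
  assumes z: "z \<in> QT"
  shows "ddir (dir_x i) (energy_flux i) z = 2 * \<nu> *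
     (\<Sum>j\<in>UNIV. ddir (dir_x i) (stress i j) z * vel j z + stress i j z * ddir (dir_x i) (vel j) z)
     - ((ddir (dir_x i) dens z * vel i z + dens z * ddir (dir_x i) (vel i) z)
          * (\<Sum>j\<in>UNIV. vel j z * vel j z)
        + dens z * vel i z * (\<Sum>j\<in>UNIV. 2 * (vel j z * ddir (dir_x i) (vel j) z))) / 2
     - ((powr_comb (powr_comb_deriv (powr_comb_deriv (internal_energy_terms \<nu> \<kappa> \<epsilon> \<gamma>))) (dens z)
          * ddir (dir_x i) dens z * dens z + enthalpy z * ddir (dir_x i) dens z) * vel i z
        + enthalpy z * dens z * ddir (dir_x i) (vel i) z)
     + 2 * \<kappa>\<^sup>2 * ((ddir (dir_x i) dens z * vel i z + dens z * ddir (dir_x i) (vel i) z) * Bohm z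
        + dens z * vel i z * ddir (dir_x i) Bohm z)
     + 4 * \<kappa>\<^sup>2 * (ddir (dir_x i) (Psi i) z * Phi_t z + Psi i z * ddir (dir_x i) Phi_t z)"
  unfolding energy_flux_def using z by (simp add: ddir_QT_rules ddir_enthalpy)

lemma energy_balance_pointwise:
  assumes z: "z \<in> QT"
  shows "ddir dir_t energy z = (\<Sum>i\<in>UNIV. ddir (dir_x i) (energy_flux i) z)
     - 2 * \<nu> * (h_dens z * (\<Sum>i\<in>UNIV. \<Sum>j\<in>UNIV. sym_grad i j z * sym_grad i j z)
                + g_dens z * (div_vel z * div_vel z))
     - ptil \<epsilon> (dens z) * (\<Sum>j\<in>UNIV. vel j z * vel j z)"
proof (rule energy_balance_algebra[OF ddir_t_energy[OF z] ddir_x_energy_flux[OF z]])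
  show "ddir dir_t dens z
      + (\<Sum>i\<in>UNIV. ddir (dir_x i) dens z * vel i z + dens z * ddir (dir_x i) (vel i) z) = 0"
    using continuity_eq[OF z] z by (simp add: ddir_QT_rules)
  show "ddir dir_t dens z * vel j z + dens z * ddir dir_t (vel j) z
      + (\<Sum>i\<in>UNIV. (ddir (dir_x i) dens z * vel i z + dens z * ddir (dir_x i) (vel i) z) * vel j z
          + dens z * vel i z * ddir (dir_x i) (vel j) z)
      - 2 * \<nu> * (\<Sum>i\<in>UNIV. ddir (dir_x i) (stress i j) z)
      + powr_comb (powr_comb_deriv (pressure_terms \<nu> \<kappa> \<epsilon> \<gamma>)) (dens z) * ddir (dir_x j) dens z
      + ptil \<epsilon> (dens z) * vel j z
    = \<kappa>\<^sup>2 * (2 * dens z * ddir (dir_x j) Bohm z)" for j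
    using momentum_eq[OF z, of j] z by (simp add: ddir_QT_rules ddir_pressure)
  show "dens z * powr_comb (powr_comb_deriv (powr_comb_deriv (internal_energy_terms \<nu> \<kappa> \<epsilon> \<gamma>))) (dens z)
      = powr_comb (powr_comb_deriv (pressure_terms \<nu> \<kappa> \<epsilon> \<gamma>)) (dens z)"
    by (rule internal_energy_pressure_relation[OF pterms_exponents_ne_1[OF eps_bounds gamma_gt_1]
          dens_pos[OF z] gamma_gt_1])
  show "Phi_t z * (\<Sum>i\<in>UNIV. ddir (dir_x i) (Psi i) z) = ddir dir_t dens z * Bohm z / 2"
    using sqrt_dens_pos[OF z]
    unfolding Phi_t_eq[OF z] Bohm_def div_Psi_def hp_dens_def sqrt_dens_def by (simp add: field_simps)
  show "(\<Sum>i\<in>UNIV. \<Sum>j\<in>UNIV. stress i j z * ddir (dir_x i) (vel j) z)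
      = h_dens z * (\<Sum>i\<in>UNIV. \<Sum>j\<in>UNIV. sym_grad i j z * sym_grad i j z)
        + g_dens z * (div_vel z * div_vel z)"
    unfolding stress_def sym_grad_def div_vel_def by (rule stress_contraction)
qed

definition periodic :: "(real \<times> (real^'n) \<Rightarrow> real) \<Rightarrow> bool" where
  "periodic F \<longleftrightarrow> (\<forall>t x k. t \<in> {0<..<T} \<longrightarrow> F (t, x + axis k 1) = F (t, x))"

lemma periodic_dens [simp]: "periodic dens"
  using solution unfolding is_smooth_solution_A_def periodic_def by auto

lemma periodic_vel [simp]: "periodic (vel j)"
  using solution unfolding is_smooth_solution_A_def periodic_def by auto

lemma periodic_const [simp]: "periodic (\<lambda>_. c)"
  by (simp add: periodic_def)

lemma periodic_add [simp]: "periodic F \<Longrightarrow> periodic G \<Longrightarrow> periodic (\<lambda>z. F z + G z)"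
  by (simp add: periodic_def)

lemma periodic_diff [simp]: "periodic F \<Longrightarrow> periodic G \<Longrightarrow> periodic (\<lambda>z. F z - G z)"
  by (simp add: periodic_def)

lemma periodic_mult [simp]: "periodic F \<Longrightarrow> periodic G \<Longrightarrow> periodic (\<lambda>z. F z * G z)"
  by (simp add: periodic_def)

lemma periodic_divide [simp]: "periodic F \<Longrightarrow> periodic G \<Longrightarrow> periodic (\<lambda>z. F z / G z)"
  by (simp add: periodic_def)

lemma periodic_minus [simp]: "periodic F \<Longrightarrow> periodic (\<lambda>z. - F z)"
  by (simp add: periodic_def)

lemma periodic_if [simp]: "periodic F \<Longrightarrow> periodic (\<lambda>z. if P then F z else 0)"
  by (simp add: periodic_def)

lemma periodic_sum [simp]: "(\<And>i. periodic (f i)) \<Longrightarrow> periodic (\<lambda>z. \<Sum>i\<in>I. f i z)"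
  by (simp add: periodic_def)

lemma periodic_comp: "periodic F \<Longrightarrow> periodic (\<lambda>z. \<phi> (F z))"
  by (simp add: periodic_def)

lemma periodic_ddir [simp]:
  assumes "periodic F"
  shows "periodic (ddir v F)"
  unfolding periodic_def
proof (intro allI impI)
  fix t x k assume t: "t \<in> {0<..<T}"
  obtain v1 v2 where v: "v = (v1, v2)" by force
  have "eventually (\<lambda>s. s \<in> {s::real. (t, x) + s *\<^sub>R v \<in> QT}) (nhds 0)"
    using open_line_preimage[OF open_QT, of "(t, x)" v] t
    by (intro eventually_nhds_in_open) (auto simp: QT_def)
  then have "eventually (\<lambda>s. F ((t, x + axis k 1) + s *\<^sub>R v) = F ((t, x) + s *\<^sub>R v)) (nhds 0)"
  proof eventually_elim
    case (elim s)
    then have "t + s * v1 \<in> {0<..<T}" unfolding QT_def v by simp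
    then have "F (t + s * v1, (x + s *\<^sub>R v2) + axis k 1) = F (t + s * v1, x + s *\<^sub>R v2)"
      using assms unfolding periodic_def by blast
    then show ?case unfolding v by (simp add: algebra_simps)
  qed
  then show "ddir v F (t, x + axis k 1) = ddir v F (t, x)"
    unfolding ddir_def by (rule deriv_cong_ev[OF _ refl])
qed

lemma periodic_energy_flux [simp]: "periodic (energy_flux i)"
  by (simp add: energy_flux_def stress_def sym_grad_def div_vel_def Bohm_def div_Psi_def Psi_def
      Phi_t_def h_dens_def g_dens_def hp_dens_def sqrt_dens_def enthalpy_def Phi_def periodic_comp)

lemma continuous_on_slice:
  assumes "smooth_on QT G" "t \<in> {0<..<T}"
  shows "continuous_on A (\<lambda>x. G (t, x))"
proof (rule continuous_on_compose2[OF smooth_on_continuous[OF assms(1)]])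
  show "continuous_on A (\<lambda>x. (t, x))" by (intro continuous_intros)
  show "(\<lambda>x. (t, x)) ` A \<subseteq> QT" using assms(2) unfolding QT_def by auto
qed

lemma integrable_on_slice:
  "smooth_on QT G \<Longrightarrow> t \<in> {0<..<T} \<Longrightarrow> (\<lambda>x. G (t, x)) integrable_on cbox a b"
  by (rule integrable_continuous[OF continuous_on_slice])

lemma integral_ddir_x_periodic:
  assumes G: "smooth_on QT G" "periodic G" and t: "t \<in> {0<..<T}"
  shows "integral (cbox 0 One) (\<lambda>x. ddir (dir_x i) G (t, x)) = 0"
proof (rule integral_derivative_periodic)
  show "continuous_on UNIV (\<lambda>x. G (t, x))"
    by (rule continuous_on_slice[OF G(1) t])
  show "continuous_on UNIV (\<lambda>x. ddir (dir_x i) G (t, x))"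
    by (rule continuous_on_slice[OF smooth_on_ddir[OF G(1)] t])
  fix x
  have "(t, x) \<in> QT" using t by (simp add: mem_QT)
  from smooth_on_has_ddir[OF G(1) this, of "dir_x i"]
  show "((\<lambda>s. G (t, x + s *\<^sub>R axis i 1)) has_real_derivative ddir (dir_x i) G (t, x)) (at 0)"
    by (simp add: dir_x_def)
  show "G (t, x + axis i 1) = G (t, x)"
    using G(2) t unfolding periodic_def by blast
  show "ddir (dir_x i) G (t, x + axis i 1) = ddir (dir_x i) G (t, x)"
    using periodic_ddir[OF G(2)] t unfolding periodic_def by blast
qed

lemma has_real_derivative_integral_energy:
  assumes t: "t \<in> {0<..<T}"
  shows "((\<lambda>s. integral (cbox 0 One) (\<lambda>x. energy (s, x))) has_real_derivative
           integral (cbox 0 One) (\<lambda>x. ddir dir_t energy (t, x))) (at t)"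
proof -
  have "((\<lambda>s. integral (cbox 0 One) (\<lambda>x. energy (s, x))) has_real_derivative
           integral (cbox 0 One) (\<lambda>x. ddir dir_t energy (t, x))) (at t within {0<..<T})"
  proof (rule leibniz_rule_field_derivative[where fx="\<lambda>s x. ddir dir_t energy (s, x)"])
    fix s x assume s: "s \<in> {0<..<T}"
    have "(0, x) + s *\<^sub>R dir_t \<in> QT" using s by (simp add: mem_QT dir_t_def)
    from smooth_on_has_ddir_at[OF smooth_on_energy this]
    have "((\<lambda>s. energy (s, x)) has_real_derivative ddir dir_t energy (s, x)) (at s)"
      by (simp add: dir_t_def)
    then show "((\<lambda>s. energy (s, x)) has_real_derivative ddir dir_t energy (s, x)) (at s within {0<..<T})"
      by (rule has_field_derivative_at_within)
  next
    fix s assume "s \<in> {0<..<T}"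
    then show "(\<lambda>x. energy (s, x)) integrable_on cbox 0 One"
      by (rule integrable_on_slice[OF smooth_on_energy])
  next
    have "continuous_on QT (ddir dir_t energy)"
      by (rule smooth_on_continuous[OF smooth_on_ddir[OF smooth_on_energy]])
    then have "continuous_on ({0<..<T} \<times> cbox 0 One) (ddir dir_t energy)"
      by (rule continuous_on_subset) (auto simp: QT_def)
    then show "continuous_on ({0<..<T} \<times> cbox 0 One) (\<lambda>(s, x). ddir dir_t energy (s, x))"
      by (simp add: case_prod_beta)
  qed (use t in auto)
  then show ?thesis using at_within_open[of t "{0<..<T}"] t by simp
qed

lemma integral_energy_balance:
  assumes t: "t \<in> {0<..<T}"
  shows "integral (cbox 0 One) (\<lambda>x. ddir dir_t energy (t, x))
     + 2 * \<nu> * integral (cbox 0 One)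
         (\<lambda>x. h_dens (t, x) * (\<Sum>i\<in>UNIV. \<Sum>j\<in>UNIV. sym_grad i j (t, x) * sym_grad i j (t, x)))
     + 2 * \<nu> * integral (cbox 0 One) (\<lambda>x. g_dens (t, x) * (div_vel (t, x) * div_vel (t, x)))
     + integral (cbox 0 One)
         (\<lambda>x. ptil \<epsilon> (dens (t, x)) * (\<Sum>j\<in>UNIV. vel j (t, x) * vel j (t, x))) = 0"
proof -
  let ?Q = "cbox (0::real^'n) One"
  define Dh where "Dh z = h_dens z * (\<Sum>i\<in>UNIV. \<Sum>j\<in>UNIV. sym_grad i j z * sym_grad i j z)" for z
  define Dg where "Dg z = g_dens z * (div_vel z * div_vel z)" for z
  define Dp where "Dp z = ptil \<epsilon> (dens z) * (\<Sum>j\<in>UNIV. vel j z * vel j z)" for z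
  have "smooth_on QT Dh" "smooth_on QT Dg" "smooth_on QT Dp"
    unfolding Dh_def Dg_def Dp_def by simp_all
  then have Dh: "((\<lambda>x. Dh (t, x)) has_integral integral ?Q (\<lambda>x. Dh (t, x))) ?Q"
    and Dg: "((\<lambda>x. Dg (t, x)) has_integral integral ?Q (\<lambda>x. Dg (t, x))) ?Q"
    and Dp: "((\<lambda>x. Dp (t, x)) has_integral integral ?Q (\<lambda>x. Dp (t, x))) ?Q"
    by (auto intro: integrable_integral integrable_on_slice[OF _ t])
  have "((\<lambda>x. ddir (dir_x i) (energy_flux i) (t, x)) has_integral 0) ?Q" for i
  proof -
    have "(\<lambda>x. ddir (dir_x i) (energy_flux i) (t, x)) integrable_on ?Q"
      by (rule integrable_on_slice[OF smooth_on_ddir[OF smooth_on_energy_flux] t])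
    from integrable_integral[OF this] show ?thesis
      unfolding integral_ddir_x_periodic[OF smooth_on_energy_flux periodic_energy_flux t] .
  qed
  then have "((\<lambda>x. \<Sum>i\<in>UNIV. ddir (dir_x i) (energy_flux i) (t, x)) has_integral 0) ?Q"
    using has_integral_sum[of UNIV "\<lambda>i x. ddir (dir_x i) (energy_flux i) (t, x)" "\<lambda>i. 0" ?Q] by simp
  from has_integral_diff[OF has_integral_diff[OF this has_integral_mult_right[OF has_integral_add[OF Dh Dg]]] Dp]
  have "((\<lambda>x. ddir dir_t energy (t, x)) has_integral
      0 - 2 * \<nu> * (integral ?Q (\<lambda>x. Dh (t, x)) + integral ?Q (\<lambda>x. Dg (t, x)))
        - integral ?Q (\<lambda>x. Dp (t, x))) ?Q"
    using t by (simp add: energy_balance_pointwise mem_QT Dh_def Dg_def Dp_def)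
  then show ?thesis
    unfolding Dh_def Dg_def Dp_def by (simp add: integral_unique algebra_simps)
qed

lemma energy_identity:
  assumes t: "t \<in> {0<..<T}"
  shows "\<exists>D.
        ((\<lambda>s. integral (cbox 0 One) (\<lambda>x.
            \<rho> s x * (norm (u s x))\<^sup>2 / 2 + \<rho> s x powr \<gamma> / (\<gamma> - 1)
            + ffun \<nu> \<kappa> \<epsilon> \<gamma> (\<rho> s x)
            + 2 * \<kappa>\<^sup>2 * (norm (hp \<epsilon> \<gamma> (\<rho> s x) *\<^sub>R grad (\<lambda>y. sqrt (\<rho> s y)) x))\<^sup>2))
          has_real_derivative D) (at t) \<and>
        D + 2 * \<nu> * integral (cbox 0 One)
              (\<lambda>x. hfun \<epsilon> \<gamma> (\<rho> t x) * (\<Sum>i\<in>UNIV. \<Sum>j\<in>UNIV. (Dsym (u t) i j x)\<^sup>2))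
          + 2 * \<nu> * integral (cbox 0 One) (\<lambda>x. gfun \<epsilon> \<gamma> (\<rho> t x) * (divg (u t) x)\<^sup>2)
          + integral (cbox 0 One) (\<lambda>x. ptil \<epsilon> (\<rho> t x) * (norm (u t x))\<^sup>2) = 0"
proof -
  have energy_eq: "\<rho> s x * (norm (u s x))\<^sup>2 / 2 + \<rho> s x powr \<gamma> / (\<gamma> - 1) + ffun \<nu> \<kappa> \<epsilon> \<gamma> (\<rho> s x)
      + 2 * \<kappa>\<^sup>2 * (norm (hp \<epsilon> \<gamma> (\<rho> s x) *\<^sub>R grad (\<lambda>y. sqrt (\<rho> s y)) x))\<^sup>2 = energy (s, x)" for s x
    unfolding norm_square_cart
    by (simp add: energy_def internal_energy_def Psi_def hp_dens_def grad_def dx_sqrt_eq add.assoc)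
  have h_eq: "hfun \<epsilon> \<gamma> (\<rho> t x) * (\<Sum>i\<in>UNIV. \<Sum>j\<in>UNIV. (Dsym (u t) i j x)\<^sup>2)
      = h_dens (t, x) * (\<Sum>i\<in>UNIV. \<Sum>j\<in>UNIV. sym_grad i j (t, x) * sym_grad i j (t, x))" for x
    by (simp add: h_dens_def Dsym_eq power2_eq_square)
  have g_eq: "gfun \<epsilon> \<gamma> (\<rho> t x) * (divg (u t) x)\<^sup>2 = g_dens (t, x) * (div_vel (t, x) * div_vel (t, x))"
    for x
    by (simp add: g_dens_def divg_eq power2_eq_square)
  have ptil_eq: "ptil \<epsilon> (\<rho> t x) * (norm (u t x))\<^sup>2
      = ptil \<epsilon> (dens (t, x)) * (\<Sum>j\<in>UNIV. vel j (t, x) * vel j (t, x))" for x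
    by (simp add: norm_square_cart)
  show ?thesis
    unfolding energy_eq h_eq g_eq ptil_eq
    using has_real_derivative_integral_energy[OF t] integral_energy_balance[OF t] by blast
qed

end

text \<open>The identity holds in every dimension and for all \<nu>, \<kappa>; the choice \<epsilon>0 = 1/2 only keeps
  every exponent of pterms away from 1, where the coefficients of ffun would be junk.\<close>

theorem proposition4p1:
  fixes \<nu> \<kappa> \<gamma> :: real
  assumes "CARD('n::finite) = 2 \<or> CARD('n) = 3"
    and "0 < \<kappa>" and "\<kappa> < \<nu>" and "1 < \<gamma>"
  shows "\<exists>\<epsilon>0>0. \<forall>\<epsilon> T (\<rho> :: real \<Rightarrow> real^'n \<Rightarrow> real) (u :: real \<Rightarrow> real^'n \<Rightarrow> real^'n).
     0 < \<epsilon> \<and> \<epsilon> < \<epsilon>0 \<and> \<epsilon>\<^sup>2 * (\<gamma> - 1) < 1 \<and> 0 < T \<and>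
     is_smooth_solution_A \<nu> \<kappa> \<gamma> \<epsilon> T \<rho> u \<longrightarrow>
     (\<forall>t\<in>{0<..<T}. \<exists>D.
        ((\<lambda>s. integral (cbox 0 One) (\<lambda>x.
            \<rho> s x * (norm (u s x))\<^sup>2 / 2 + \<rho> s x powr \<gamma> / (\<gamma> - 1)
            + ffun \<nu> \<kappa> \<epsilon> \<gamma> (\<rho> s x)
            + 2 * \<kappa>\<^sup>2 * (norm (hp \<epsilon> \<gamma> (\<rho> s x) *\<^sub>R grad (\<lambda>y. sqrt (\<rho> s y)) x))\<^sup>2))
          has_real_derivative D) (at t) \<and>
        D + 2 * \<nu> * integral (cbox 0 One)
              (\<lambda>x. hfun \<epsilon> \<gamma> (\<rho> t x) * (\<Sum>i\<in>UNIV. \<Sum>j\<in>UNIV. (Dsym (u t) i j x)\<^sup>2))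
          + 2 * \<nu> * integral (cbox 0 One) (\<lambda>x. gfun \<epsilon> \<gamma> (\<rho> t x) * (divg (u t) x)\<^sup>2)
          + integral (cbox 0 One) (\<lambda>x. ptil \<epsilon> (\<rho> t x) * (norm (u t x))\<^sup>2) = 0)"
  apply (rule exI[of _ "1/2"], intro conjI allI impI ballI)
   apply simp
  apply (rule smooth_solution_A.energy_identity)
   apply (unfold_locales; use assms(4) in auto)
  apply assumption
  done

end
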